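(* Let $L=L_\Delta=\lceil\gamma_{\mathrm{paths}}c_{1,\mathrm{paths}}\log(c_{2,\mathrm{paths}}\Delta^{-1})\rceil$ with constants $\gamma_{\mathrm{paths}}>0$, $c_{2,\mathrm{paths}}>0$, and $c_{1,\mathrm{paths}}>c^*_{\mathrm{paths}}(Q,D):=\frac23+\frac83\sum_{|\mathbf j|_1\le Q}\prod_{d=1}^D(2j_d+1)$, and let $\tau\in\big(0,1-(c^*_{\mathrm{paths}}(Q,D)/c_{1,\mathrm{paths}})^{1/2}\big)$. Then there is $\Delta_0>0$ such that for every $\Delta\le\Delta_0$, $\epsilon_\Delta:=1-\tau/\lambda_{\min,\Delta}\in(0,1-\tau/2]$ and $$2K\exp\Big\{-\frac{3\epsilon_\Delta^2L}{6m_\Delta\lambda_{\max,\Delta}/\lambda_{\min,\Delta}^2+2\epsilon_\Delta(m_\Delta/\lambda_{\min,\Delta}+\lambda_{\max,\Delta}/\lambda_{\min,\Delta})}\Big\}\le\frac{2\binom{D+Q}{D}}{c_{2,\mathrm{paths}}^{\gamma_{\mathrm{paths}}}}\Delta^{\gamma_{\mathrm{paths}}}.$$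
   Context: $b:\mathbb{R}^D\to\mathbb{R}^D$, $\sigma:\mathbb{R}^D\to\mathbb{R}^{D\times D}$ measurable with $\sup_u(|b(u)|_2+\|\sigma(u)\|_2)\le C_{b,\sigma}$. For $\Delta>0$: $h=c_{\mathrm{cube}}\Delta^{\gamma_{\mathrm{cube}}}$ with $c_{\mathrm{cube}}>0$, $0<\gamma_{\mathrm{cube}}<1/2$; $r_2=\sqrt{2\log(c_{2,\mathrm{trunc}}\Delta^{-\gamma_{2,\mathrm{trunc}}}\log(\Delta^{-1}))}$ with $c_{2,\mathrm{trunc}},\gamma_{2,\mathrm{trunc}}>0$; $[x]_r$ is componentwise truncation to $[-r,r]$. Fix $a_0\in\mathbb{R}^D$, let $U_h$ be uniform on $a_0+(-h/2,h/2]^D$, $\xi$ a $D$-dim standard normal vector independent of $U_h$, and $\tilde X_\Delta=U_h+b(U_h)\Delta+\sigma(U_h)\sqrt\Delta[\xi]_{r_2}$. $\mathcal{L}_q$ is the Legendre polynomial of degree $q$ with $\mathcal{L}_q(1)=1$, $p_{\mathbf j}(x)=\prod_d\sqrt{2j_d+1}\mathcal{L}_{j_d}(x_d)$; for fixed $Q\in\mathbb{N}_0$, $\eta_1,\dots,\eta_K$ ($K=\binom{D+Q}{D}$) is a fixed ordering of $x\mapsto p_{\mathbf j}((x-a_0)/(h/2))$, $|\mathbf j|_1\le Q$. $R_\Delta=(E[\eta_k(\tilde X_\Delta)\eta_\kappa(\tilde X_\Delta)])_{k,\kappa}$, $\lambda_{\min,\Delta}=\lambda_{\min}(R_\Delta)$,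 $\lambda_{\max,\Delta}=\lambda_{\max}(R_\Delta)$, $m_\Delta=\sup_{x\in\operatorname{supp}(\tilde X_\Delta)}\sum_{k=1}^K|\eta_k(x)|^2$. *)

theory Defs
  imports "HOL-Probability.Probability"
begin

text \<open>Legendre polynomials, normalised so that legendre q 1 = 1 (Bonnet recursion).\<close>
fun legendre :: "nat \<Rightarrow> real \<Rightarrow> real" where
  "legendre 0 x = 1"
| "legendre (Suc 0) x = x"
| "legendre (Suc (Suc n)) x =
     ((2 * real n + 3) * x * legendre (Suc n) x - (real n + 1) * legendre n x) / (real n + 2)"

definition multi_idx :: "nat \<Rightarrow> ('d::finite \<Rightarrow> nat) set" where
  "multi_idx Q = {j. (\<Sum>d\<in>UNIV. j d) \<le> Q}"

definition p_leg :: "('d::finite \<Rightarrow> nat) \<Rightarrow> real^'d \<Rightarrow> real" where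
  "p_leg j x = (\<Prod>d\<in>UNIV. sqrt (2 * real (j d) + 1) * legendre (j d) (x $ d))"

definition eta :: "real^'d \<Rightarrow> real \<Rightarrow> ('d::finite \<Rightarrow> nat) \<Rightarrow> real^'d \<Rightarrow> real" where
  "eta a0 h j x = p_leg j (\<chi> d. (x $ d - a0 $ d) / (h / 2))"

definition trunc_vec :: "real \<Rightarrow> real^'d \<Rightarrow> real^'d" where
  "trunc_vec r x = (\<chi> d. max (- r) (min r (x $ d)))"

definition cube :: "real^'d \<Rightarrow> real \<Rightarrow> (real^'d) set" where
  "cube a0 h = {x. \<forall>d. a0 $ d - h / 2 < x $ d \<and> x $ d \<le> a0 $ d + h / 2}"

definition std_normal_vec :: "(real^'d::finite) measure" where
  "std_normal_vec = density lborel (\<lambda>x. ennreal (\<Prod>d\<in>UNIV. std_normal_density (x $ d)))"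

definition h_cube :: "real \<Rightarrow> real \<Rightarrow> real \<Rightarrow> real" where
  "h_cube c_cube \<gamma>_cube \<Delta> = c_cube * \<Delta> powr \<gamma>_cube"

definition r2_trunc :: "real \<Rightarrow> real \<Rightarrow> real \<Rightarrow> real" where
  "r2_trunc c2t \<gamma>2t \<Delta> = sqrt (2 * ln (c2t * \<Delta> powr (- \<gamma>2t) * ln (1 / \<Delta>)))"

definition Xlaw ::
  "(real^'d \<Rightarrow> real^'d) \<Rightarrow> (real^'d \<Rightarrow> real^'d^'d) \<Rightarrow> real^'d::finite \<Rightarrow> real \<Rightarrow> real \<Rightarrow> real
     \<Rightarrow> (real^'d) measure" where
  "Xlaw b \<sigma> a0 h r \<Delta> =
     distr (uniform_measure lborel (cube a0 h) \<Otimes>\<^sub>M std_normal_vec) borel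
       (\<lambda>(u, \<xi>). u + \<Delta> *\<^sub>R b u + sqrt \<Delta> *\<^sub>R (\<sigma> u *v trunc_vec r \<xi>))"

definition is_eigenvalue_on :: "'i set \<Rightarrow> ('i \<Rightarrow> 'i \<Rightarrow> real) \<Rightarrow> real \<Rightarrow> bool" where
  "is_eigenvalue_on J A l \<longleftrightarrow>
     (\<exists>v. (\<exists>k\<in>J. v k \<noteq> 0) \<and> (\<forall>k\<in>J. (\<Sum>\<kappa>\<in>J. A k \<kappa> * v \<kappa>) = l * v k))"

definition lambda_min_on :: "'i set \<Rightarrow> ('i \<Rightarrow> 'i \<Rightarrow> real) \<Rightarrow> real" where
  "lambda_min_on J A = Min {l. is_eigenvalue_on J A l}"

definition lambda_max_on :: "'i set \<Rightarrow> ('i \<Rightarrow> 'i \<Rightarrow> real) \<Rightarrow> real" where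
  "lambda_max_on J A = Max {l. is_eigenvalue_on J A l}"

definition supp_measure :: "('a::metric_space) measure \<Rightarrow> 'a set" where
  "supp_measure M = {x. \<forall>e>0. emeasure M (ball x e) > 0}"

text \<open>Gram matrix R_Delta, indexed by multi-indices (ordering irrelevant for spectrum).\<close>
definition gram :: "(real^'d) measure \<Rightarrow> real^'d \<Rightarrow> real \<Rightarrow> ('d::finite \<Rightarrow> nat) \<Rightarrow> ('d \<Rightarrow> nat) \<Rightarrow> real" where
  "gram M a0 h j k = (\<integral>x. eta a0 h j x * eta a0 h k x \<partial>M)"

definition m_sup :: "(real^'d) measure \<Rightarrow> real^'d \<Rightarrow> real \<Rightarrow> nat \<Rightarrow> real" where
  "m_sup M a0 h Q = (SUP x\<in>supp_measure M. \<Sum>j\<in>(multi_idx Q :: ('d::finite \<Rightarrow> nat) set). (eta a0 h j x)\<^sup>2)"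

end

theory Submission
  imports Defs "Jordan_Normal_Form.Spectral_Radius" "HOL-Real_Asymp.Real_Asymp"
begin

text \<open>For the uniform law of \<open>U\<^sub>h\<close> on the cube the rescaled tensor Legendre polynomials
  \<open>\<eta>\<^sub>k\<close> are orthonormal, and on the cube \<open>\<Sum>\<^sub>k \<eta>\<^sub>k\<^sup>2 \<le> \<Sum>\<^sub>j \<Prod>\<^sub>d (2 j\<^sub>d + 1) = S\<^sub>0\<close> because
  \<open>|P\<^sub>n| \<le> 1\<close> on \<open>[-1, 1]\<close>. One Euler step moves \<open>U\<^sub>h\<close> by at most \<open>\<Delta> C + \<surd>\<Delta> C D r\<^sub>2\<close>,
  which is \<open>o(h)\<close>; in the coordinates of the cube this is a vanishing perturbation, so
  by uniform continuity of the polynomials on a fixed box the Gram matrix \<open>R\<^sub>\<Delta>\<close> is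
  entrywise close to the identity and \<open>m\<^sub>\<Delta>\<close> exceeds \<open>S\<^sub>0\<close> by little. Gershgorin's theorem
  then confines the spectrum of \<open>R\<^sub>\<Delta>\<close> to \<open>[1 - \<delta>, 1 + \<delta>]\<close>. Since \<open>c\<^sub>1\<close> exceeds
  \<open>c\<^sup>* = (8 S\<^sub>0 + 2) / 3\<close> with room to spare, for small \<open>\<delta>\<close> the Bernstein exponent is at least
  \<open>(1 + \<delta>) \<gamma> log (c\<^sub>2 / \<Delta>)\<close>, and the surplus factor \<open>(\<Delta> / c\<^sub>2)\<^bsup>\<delta>\<gamma>\<^esup>\<close> absorbs \<open>K\<close>.\<close>

no_notation Matrix.vec_index (infixl \<open>$\<close> 100)

section \<open>Legendre polynomials\<close>

fun legendre_deriv :: "nat \<Rightarrow> real \<Rightarrow> real" where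
  "legendre_deriv 0 x = 0"
| "legendre_deriv (Suc 0) x = 1"
| "legendre_deriv (Suc (Suc n)) x =
     ((2 * real n + 3) * (legendre (Suc n) x + x * legendre_deriv (Suc n) x)
       - (real n + 1) * legendre_deriv n x) / (real n + 2)"

fun legendre_deriv2 :: "nat \<Rightarrow> real \<Rightarrow> real" where
  "legendre_deriv2 0 x = 0"
| "legendre_deriv2 (Suc 0) x = 0"
| "legendre_deriv2 (Suc (Suc n)) x =
     ((2 * real n + 3) * (2 * legendre_deriv (Suc n) x + x * legendre_deriv2 (Suc n) x)
       - (real n + 1) * legendre_deriv2 n x) / (real n + 2)"

lemma has_real_derivative_legendre: "(legendre n has_real_derivative legendre_deriv n x) (at x)"
proof (induction n x rule: legendre.induct)
  case (3 n y)
  show ?case unfolding legendre.simps legendre_deriv.simps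
    by (rule DERIV_cdivide) (auto intro!: derivative_eq_intros 3 simp: field_simps)
qed (auto intro!: derivative_eq_intros)

lemma has_real_derivative_legendre_deriv:
  "(legendre_deriv n has_real_derivative legendre_deriv2 n x) (at x)"
proof (induction n x rule: legendre.induct)
  case (3 n y)
  show ?case unfolding legendre_deriv.simps legendre_deriv2.simps
    by (rule DERIV_cdivide)
       (auto intro!: derivative_eq_intros 3 has_real_derivative_legendre simp: field_simps)
qed (auto intro!: derivative_eq_intros)

lemma continuous_on_legendre: "continuous_on S (legendre n)"
  using has_real_derivative_legendre DERIV_isCont continuous_at_imp_continuous_on by blast

lemma borel_measurable_legendre [measurable]: "legendre n \<in> borel_measurable borel"
  by (rule borel_measurable_continuous_onI[OF continuous_on_legendre])

lemma legendre_one: "legendre n 1 = 1"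
  by (induction n "1::real" rule: legendre.induct) (auto simp: field_simps)

lemma legendre_minus: "legendre n (-x) = (-1)^n * legendre n x"
  by (induction n x rule: legendre.induct) (auto simp: field_simps)

lemma legendre_recurrence:
  "(real n + 1) * legendre (Suc n) x = (2 * real n + 1) * x * legendre n x - real n * legendre (n - 1) x"
  by (cases n) (auto simp: field_simps)

lemma legendre_deriv_recurrences:
  "legendre_deriv (Suc n) x = x * legendre_deriv n x + (real n + 1) * legendre n x \<and>
   x * legendre_deriv (Suc n) x - legendre_deriv n x = (real n + 1) * legendre (Suc n) x"
proof (induction n)
  case 0 then show ?case by simp
next
  case (Suc n)
  then have A: "legendre_deriv (Suc n) x = x * legendre_deriv n x + (real n + 1) * legendre n x"
    and B: "x * legendre_deriv (Suc n) x - legendre_deriv n x = (real n + 1) * legendre (Suc n) x"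
    by auto
  have C: "legendre_deriv n x = x * legendre_deriv (Suc n) x - (real n + 1) * legendre (Suc n) x"
    using B by simp
  have 1: "legendre_deriv (Suc (Suc n)) x
      = x * legendre_deriv (Suc n) x + (real (Suc n) + 1) * legendre (Suc n) x"
    unfolding legendre_deriv.simps C by (simp add: field_simps)
  have "x * legendre_deriv (Suc (Suc n)) x - legendre_deriv (Suc n) x
      = x * x * legendre_deriv (Suc n) x + (real n + 2) * x * legendre (Suc n) x
        - legendre_deriv (Suc n) x"
    using 1 by (simp add: algebra_simps)
  also have "x * x * legendre_deriv (Suc n) x
      = x * legendre_deriv n x + (real n + 1) * x * legendre (Suc n) x"
    using B by (simp add: algebra_simps)
  finally have 2: "x * legendre_deriv (Suc (Suc n)) x - legendre_deriv (Suc n) x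
      = (real (Suc n) + 1) * legendre (Suc (Suc n)) x"
    unfolding legendre.simps using A by (simp add: field_simps)
  show ?case using 1 2 by simp
qed

lemma legendre_deriv_Suc_identity:
  "(x^2 - 1) * legendre_deriv (Suc n) x = (real n + 1) * (x * legendre (Suc n) x - legendre n x)"
proof -
  have A: "legendre_deriv (Suc n) x = x * legendre_deriv n x + (real n + 1) * legendre n x"
    and B: "x * legendre_deriv (Suc n) x - legendre_deriv n x = (real n + 1) * legendre (Suc n) x"
    using legendre_deriv_recurrences[of n x] by blast+
  have "(x^2 - 1) * legendre_deriv (Suc n) x
      = x * (x * legendre_deriv (Suc n) x) - legendre_deriv (Suc n) x"
    by (simp add: algebra_simps power2_eq_square)
  also have "x * legendre_deriv (Suc n) x = legendre_deriv n x + (real n + 1) * legendre (Suc n) x"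
    using B by simp
  finally show ?thesis using A by (simp add: algebra_simps)
qed

lemma legendre_ode:
  "(1 - x^2) * legendre_deriv2 n x - 2 * x * legendre_deriv n x
     + real n * (real n + 1) * legendre n x = 0"
proof (cases n)
  case 0 then show ?thesis by simp
next
  case (Suc k)
  define g where "g = (\<lambda>x. (x^2 - 1) * legendre_deriv (Suc k) x
      - (real k + 1) * (x * legendre (Suc k) x - legendre k x))"
  have g0: "g = (\<lambda>_. 0)" unfolding g_def using legendre_deriv_Suc_identity by auto
  have "(g has_real_derivative (2 * x * legendre_deriv (Suc k) x + (x^2 - 1) * legendre_deriv2 (Suc k) x
       - (real k + 1) * (legendre (Suc k) x + x * legendre_deriv (Suc k) x - legendre_deriv k x))) (at x)"
    unfolding g_def
    by (auto intro!: derivative_eq_intros has_real_derivative_legendre has_real_derivative_legendre_deriv)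
  moreover have "(g has_real_derivative 0) (at x)" unfolding g0 by simp
  ultimately have E: "2 * x * legendre_deriv (Suc k) x + (x^2 - 1) * legendre_deriv2 (Suc k) x
       - (real k + 1) * (legendre (Suc k) x + x * legendre_deriv (Suc k) x - legendre_deriv k x) = 0"
    using DERIV_unique by blast
  have "x * legendre_deriv (Suc k) x - legendre_deriv k x = (real k + 1) * legendre (Suc k) x"
    using legendre_deriv_recurrences[of k x] by blast
  then have "(real k + 1) * (legendre (Suc k) x + x * legendre_deriv (Suc k) x - legendre_deriv k x)
      = (real k + 1) * (real k + 2) * legendre (Suc k) x"
    by (simp add: algebra_simps)
  then show ?thesis using E Suc by (simp add: algebra_simps)
qed

text \<open>By the Legendre equation, \<open>P\<^sup>2 + (1 - x\<^sup>2) P'\<^sup>2 / (n (n + 1))\<close> is nondecreasing on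
  \<open>[0, 1]\<close>, and it equals \<open>1\<close> at \<open>x = 1\<close>.\<close>

lemma legendre_square_le_1_nonneg:
  assumes "0 \<le> x" "x \<le> 1"
  shows "(legendre n x)^2 \<le> 1"
proof (cases n)
  case 0 then show ?thesis by simp
next
  case (Suc k)
  define c where "c = real n * (real n + 1)"
  have c: "c > 0" using Suc by (simp add: c_def)
  define f where "f = (\<lambda>x. (legendre n x)^2 + (1 - x^2) * (legendre_deriv n x)^2 / c)"
  have d: "(f has_real_derivative 2 * t * (legendre_deriv n t)^2 / c) (at t)" for t
  proof -
    have "(f has_real_derivative 2 * legendre n t * legendre_deriv n t
        + ((- 2 * t) * (legendre_deriv n t)^2
           + (1 - t^2) * (2 * legendre_deriv n t * legendre_deriv2 n t)) / c) (at t)"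
      unfolding f_def using c
      by (auto intro!: derivative_eq_intros has_real_derivative_legendre
          has_real_derivative_legendre_deriv simp: field_simps)
    moreover have "(1 - t^2) * legendre_deriv2 n t = 2 * t * legendre_deriv n t - c * legendre n t"
      using legendre_ode[of t n] by (simp add: c_def algebra_simps)
    then have "(1 - t^2) * (2 * legendre_deriv n t * legendre_deriv2 n t)
        = 2 * legendre_deriv n t * (2 * t * legendre_deriv n t - c * legendre n t)"
      by (metis mult.commute mult.left_commute)
    ultimately show ?thesis
      using c by (simp add: field_simps power2_eq_square)
  qed
  have "f x \<le> f 1"
    by (rule DERIV_nonneg_imp_nondecreasing[of x 1 f]) (use assms d c in \<open>auto intro!: exI\<close>)
  moreover have "f 1 = 1" by (simp add: f_def legendre_one)
  moreover have "(legendre n x)^2 \<le> f x" unfolding f_def using assms c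
    by (intro add_increasing2 divide_nonneg_pos mult_nonneg_nonneg)
       (auto simp: power_le_one abs_square_le_1)
  ultimately show ?thesis by simp
qed

lemma legendre_square_le_1:
  assumes "\<bar>x\<bar> \<le> 1"
  shows "(legendre n x)^2 \<le> 1"
proof (cases "x \<ge> 0")
  case True then show ?thesis using assms legendre_square_le_1_nonneg by auto
next
  case False
  have "(legendre n x)^2 = (legendre n (-x))^2"
    by (simp add: legendre_minus power_mult_distrib power_mult[symmetric])
  also have "\<dots> \<le> 1" using assms False by (intro legendre_square_le_1_nonneg) auto
  finally show ?thesis .
qed

text \<open>The function \<open>W = (1 - x\<^sup>2)(P\<^sub>n' P\<^sub>m - P\<^sub>n P\<^sub>m')\<close> has derivative
  \<open>(m (m + 1) - n (n + 1)) P\<^sub>n P\<^sub>m\<close> and vanishes at \<open>\<plusminus>1\<close>.\<close>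

lemma legendre_orthogonal:
  assumes "n \<noteq> m"
  shows "integral {-1..1} (\<lambda>x. legendre n x * legendre m x) = 0"
proof -
  define c where "c = real m * (real m + 1) - real n * (real n + 1)"
  have "(real m - real n) * (real m + real n + 1) \<noteq> 0" using assms by simp
  then have c: "c \<noteq> 0" by (simp add: c_def algebra_simps)
  define W where "W = (\<lambda>x. (1 - x^2) *
      (legendre_deriv n x * legendre m x - legendre n x * legendre_deriv m x))"
  have ode: "(1 - x^2) * legendre_deriv2 k x - 2 * x * legendre_deriv k x
      = - (real k * (real k + 1) * legendre k x)" for k x
    using legendre_ode[of x k] by simp
  have d: "(W has_real_derivative c * (legendre n x * legendre m x)) (at x)" for x
  proof -
    have "(W has_real_derivative (- 2 * x) *
          (legendre_deriv n x * legendre m x - legendre n x * legendre_deriv m x)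
        + (1 - x^2) * (legendre_deriv2 n x * legendre m x + legendre_deriv n x * legendre_deriv m x
          - (legendre_deriv n x * legendre_deriv m x + legendre n x * legendre_deriv2 m x))) (at x)"
      unfolding W_def
      by (auto intro!: derivative_eq_intros has_real_derivative_legendre
          has_real_derivative_legendre_deriv)
    also have "(- 2 * x) *
          (legendre_deriv n x * legendre m x - legendre n x * legendre_deriv m x)
        + (1 - x^2) * (legendre_deriv2 n x * legendre m x + legendre_deriv n x * legendre_deriv m x
          - (legendre_deriv n x * legendre_deriv m x + legendre n x * legendre_deriv2 m x))
        = legendre m x * ((1 - x^2) * legendre_deriv2 n x - 2 * x * legendre_deriv n x)
          - legendre n x * ((1 - x^2) * legendre_deriv2 m x - 2 * x * legendre_deriv m x)"
      by (simp add: algebra_simps)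
    also have "\<dots> = c * (legendre n x * legendre m x)"
      by (simp only: ode) (simp add: c_def algebra_simps)
    finally show ?thesis .
  qed
  have "((\<lambda>x. c * (legendre n x * legendre m x)) has_integral (W 1 - W (-1))) {-1..1}"
    by (rule fundamental_theorem_of_calculus)
       (auto intro!: DERIV_subset[OF d] simp: has_real_derivative_iff_has_vector_derivative[symmetric])
  then have "((\<lambda>x. c * (legendre n x * legendre m x)) has_integral 0) {-1..1}"
    by (simp add: W_def)
  then have "integral {-1..1} (\<lambda>x. c * (legendre n x * legendre m x)) = 0"
    by (rule integral_unique)
  then show ?thesis using c by simp
qed

lemma integral_legendre_recurrence:
  "(real n + 1) * integral {-1..1} (\<lambda>x. legendre (Suc n) x * legendre m x)
   = (2 * real n + 1) * integral {-1..1} (\<lambda>x. x * legendre n x * legendre m x)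
     - real n * integral {-1..1} (\<lambda>x. legendre (n - 1) x * legendre m x)"
proof -
  have "(real n + 1) * integral {-1..1} (\<lambda>x. legendre (Suc n) x * legendre m x)
      = integral {-1..1} (\<lambda>x. ((real n + 1) * legendre (Suc n) x) * legendre m x)"
    by (simp add: mult.assoc)
  also have "\<dots> = integral {-1..1} (\<lambda>x. (2 * real n + 1) * (x * legendre n x * legendre m x)
      - real n * (legendre (n - 1) x * legendre m x))"
    unfolding legendre_recurrence by (simp add: algebra_simps)
  also have "\<dots> = (2 * real n + 1) * integral {-1..1} (\<lambda>x. x * legendre n x * legendre m x)
      - real n * integral {-1..1} (\<lambda>x. legendre (n - 1) x * legendre m x)"
    by (subst integral_diff)
       (auto intro!: integrable_continuous_interval continuous_intros continuous_on_legendre)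
  finally show ?thesis .
qed

lemma legendre_norm: "integral {-1..1} (\<lambda>x. legendre n x * legendre n x) = 2 / (2 * real n + 1)"
proof (induction n)
  case 0 then show ?case by simp
next
  case (Suc n)
  define T where "T = integral {-1..1} (\<lambda>x. x * legendre n x * legendre (Suc n) x)"
  define N where "N = integral {-1..1} (\<lambda>x. legendre (Suc n) x * legendre (Suc n) x)"
  have N: "(real n + 1) * N = (2 * real n + 1) * T"
    using integral_legendre_recurrence[of n "Suc n"]
    by (cases n) (auto simp: T_def N_def legendre_orthogonal simp del: legendre.simps)
  have "0 = (2 * real n + 3) * T - (real n + 1) * (2 / (2 * real n + 1))"
    using integral_legendre_recurrence[of "Suc n" n] Suc
    by (simp add: T_def legendre_orthogonal mult.commute mult.left_commute algebra_simps
        del: legendre.simps)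
  then have "(2 * real n + 1) * T = (real n + 1) * (2 / (2 * real n + 3))"
    by (simp add: field_simps)
  then have "(real n + 1) * N = (real n + 1) * (2 / (2 * real n + 3))"
    using N by simp
  then have "N = 2 / (2 * real n + 3)"
    by (subst (asm) mult_left_cancel) auto
  then show ?case
    by (simp add: N_def add.commute)
qed

lemma Basis_vec_eq_range_axis: "(Basis :: (real^'d) set) = range (\<lambda>i. axis i 1)"
  by (auto simp: Basis_vec_def)

lemma inj_axis_1: "inj (\<lambda>i. axis i (1::real) :: real^'d)"
  by (auto simp: inj_def axis_eq_axis)

lemma prod_Basis_vec: "(\<Prod>b\<in>(Basis :: (real^'d) set). g b) = (\<Prod>i\<in>UNIV. g (axis i (1::real)))"
  unfolding Basis_vec_eq_range_axis by (subst prod.reindex[OF inj_axis_1]) simp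

lemma sum_Basis_vec_nth: "(\<Sum>b\<in>(Basis :: (real^'d) set). c b *\<^sub>R b) $ i = c (axis i 1)"
proof -
  have "(\<Sum>b\<in>(Basis :: (real^'d) set). c b *\<^sub>R b) $ i
      = (\<Sum>j\<in>UNIV. c (axis j 1) * (axis j (1::real) $ i))"
    unfolding Basis_vec_eq_range_axis by (subst sum.reindex[OF inj_axis_1]) (simp add: sum_component)
  also have "\<dots> = (\<Sum>j\<in>UNIV. if j = i then c (axis i 1) else 0)"
    by (intro sum.cong) (auto simp: axis_def)
  finally show ?thesis by simp
qed

lemma nn_integral_lborel_prod_vec_nth:
  fixes f :: "'d::finite \<Rightarrow> real \<Rightarrow> ennreal"
  assumes [measurable]: "\<And>i. f i \<in> borel_measurable borel"
  shows "(\<integral>\<^sup>+x. (\<Prod>i\<in>UNIV. f i (x $ i)) \<partial>(lborel :: (real^'d) measure))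
    = (\<Prod>i\<in>UNIV. \<integral>\<^sup>+t. f i t \<partial>lborel)"
proof -
  have "(\<integral>\<^sup>+x. (\<Prod>i\<in>UNIV. f i (x $ i)) \<partial>(lborel :: (real^'d) measure))
      = (\<integral>\<^sup>+x. (\<Prod>i\<in>UNIV. f i ((\<Sum>b\<in>Basis. x b *\<^sub>R b) $ i))
          \<partial>(\<Pi>\<^sub>M b\<in>(Basis :: (real^'d) set). lborel))"
    by (subst lborel_eq) (simp add: nn_integral_distr)
  also have "\<dots> = (\<integral>\<^sup>+x. (\<Prod>b\<in>(Basis :: (real^'d) set). f (axis_index b) (x b))
      \<partial>(\<Pi>\<^sub>M b\<in>(Basis :: (real^'d) set). lborel))"
    by (simp only: sum_Basis_vec_nth) (simp add: prod_Basis_vec axis_index)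
  also have "\<dots> = (\<Prod>b\<in>(Basis :: (real^'d) set). \<integral>\<^sup>+t. f (axis_index b) t \<partial>lborel)"
    by (rule product_sigma_finite.product_nn_integral_prod)
       (auto simp: product_sigma_finite_def intro: sigma_finite_lborel)
  finally show ?thesis
    by (simp add: prod_Basis_vec axis_index)
qed

lemma integral_lborel_prod_vec_nth:
  fixes f :: "'d::finite \<Rightarrow> real \<Rightarrow> real"
  assumes int: "\<And>i. integrable lborel (f i)"
  shows "(\<integral>x. (\<Prod>i\<in>UNIV. f i (x $ i)) \<partial>(lborel :: (real^'d) measure))
    = (\<Prod>i\<in>UNIV. \<integral>t. f i t \<partial>lborel)"
proof -
  have [measurable]: "f i \<in> borel_measurable borel" for i using int[of i] by auto
  have "(\<integral>x. (\<Prod>i\<in>UNIV. f i (x $ i)) \<partial>(lborel :: (real^'d) measure))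
      = (\<integral>x. (\<Prod>i\<in>UNIV. f i ((\<Sum>b\<in>Basis. x b *\<^sub>R b) $ i))
          \<partial>(\<Pi>\<^sub>M b\<in>(Basis :: (real^'d) set). lborel))"
    by (subst lborel_eq) (simp add: integral_distr)
  also have "\<dots> = (\<integral>x. (\<Prod>b\<in>(Basis :: (real^'d) set). f (axis_index b) (x b))
      \<partial>(\<Pi>\<^sub>M b\<in>(Basis :: (real^'d) set). lborel))"
    by (simp only: sum_Basis_vec_nth) (simp add: prod_Basis_vec axis_index)
  also have "\<dots> = (\<Prod>b\<in>(Basis :: (real^'d) set). \<integral>t. f (axis_index b) t \<partial>lborel)"
    by (rule product_sigma_finite.product_integral_prod)
       (auto simp: product_sigma_finite_def int intro: sigma_finite_lborel)
  finally show ?thesis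
    by (simp add: prod_Basis_vec axis_index)
qed

lemma borel_measurable_vec_nth [measurable]:
  "(\<lambda>x::('a::real_normed_vector)^'n. x $ i) \<in> borel_measurable borel"
  by (intro borel_measurable_continuous_onI continuous_intros)

lemma borel_measurable_vec_componentwise:
  fixes f :: "'a \<Rightarrow> real^'d"
  assumes "\<And>i. (\<lambda>x. f x $ i) \<in> borel_measurable M"
  shows "f \<in> borel_measurable M"
proof -
  have "(\<lambda>x. f x \<bullet> b) \<in> borel_measurable M" if "b \<in> Basis" for b
  proof -
    from that obtain i where b: "b = axis i 1" unfolding Basis_vec_eq_range_axis by auto
    have "(\<lambda>x. f x \<bullet> b) = (\<lambda>x. f x $ i)" unfolding b by (simp add: inner_axis)
    then show ?thesis using assms by simp
  qed
  then show ?thesis by (subst borel_measurable_euclidean_space) auto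
qed

lemma sets_cube [measurable]: "cube a0 h \<in> sets (borel :: (real^'d::finite) measure)"
  unfolding cube_def by measurable

lemma indicator_cube:
  "indicator (cube a0 h) x
    = (\<Prod>d\<in>UNIV. indicator {a0 $ d - h/2 <.. a0 $ d + h/2} (x $ d) :: 'b::comm_semiring_1)"
proof (cases "x \<in> cube a0 h")
  case True then show ?thesis by (auto simp: cube_def indicator_def)
next
  case False
  then obtain d where "\<not> (a0 $ d - h / 2 < x $ d \<and> x $ d \<le> a0 $ d + h / 2)"
    by (auto simp: cube_def)
  then have "\<exists>d\<in>UNIV. indicator {a0 $ d - h/2 <.. a0 $ d + h/2} (x $ d) = (0::'b)"
    by (auto simp: indicator_def)
  then show ?thesis using False by (simp add: prod_zero)
qed

lemma emeasure_cube:
  assumes "h > 0"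
  shows "emeasure lborel (cube a0 h :: (real^'d::finite) set) = ennreal (h ^ CARD('d))"
proof -
  have "emeasure lborel (cube a0 h :: (real^'d::finite) set)
      = (\<integral>\<^sup>+x. (\<Prod>d\<in>UNIV. indicator {a0 $ d - h/2 <.. a0 $ d + h/2} (x $ d))
          \<partial>(lborel :: (real^'d) measure))"
    by (simp add: indicator_cube[symmetric])
  also have "\<dots> = (\<Prod>d\<in>(UNIV::'d set). \<integral>\<^sup>+t. indicator {a0 $ d - h/2 <.. a0 $ d + h/2} t \<partial>lborel)"
    by (rule nn_integral_lborel_prod_vec_nth) simp
  also have "\<dots> = ennreal (h ^ CARD('d))" using assms by (simp add: ennreal_power)
  finally show ?thesis .
qed

lemma prob_space_std_normal_vec: "prob_space (std_normal_vec :: (real^'d::finite) measure)"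
proof
  have "emeasure (std_normal_vec :: (real^'d) measure) UNIV
      = (\<integral>\<^sup>+x. (\<Prod>d\<in>UNIV. ennreal (std_normal_density (x $ d))) \<partial>(lborel :: (real^'d) measure))"
    unfolding std_normal_vec_def by (simp add: emeasure_density prod_ennreal)
  also have "\<dots> = (\<Prod>d\<in>(UNIV::'d set). \<integral>\<^sup>+t. ennreal (std_normal_density t) \<partial>lborel)"
    by (rule nn_integral_lborel_prod_vec_nth) simp
  also have "(\<integral>\<^sup>+t. ennreal (std_normal_density t) \<partial>lborel) = 1"
    by (subst nn_integral_eq_integral) auto
  finally show "emeasure (std_normal_vec :: (real^'d) measure) (space std_normal_vec) = 1"
    unfolding std_normal_vec_def by simp
qed

lemma sets_std_normal_vec [measurable_cong]:
  "sets (std_normal_vec :: (real^'d::finite) measure) = sets borel"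
  by (simp add: std_normal_vec_def)

lemma prob_space_uniform_cube:
  assumes "h > 0"
  shows "prob_space (uniform_measure lborel (cube a0 h :: (real^'d::finite) set))"
  by (rule prob_space_uniform_measure) (use emeasure_cube[OF assms, of a0] assms in auto)

lemma integral_uniform_cube:
  assumes h: "h > 0" and f[measurable]: "f \<in> borel_measurable borel"
  shows "(\<integral>x. f x \<partial>uniform_measure lborel (cube a0 h :: (real^'d::finite) set))
     = (\<integral>x. indicator (cube a0 h) x * f x \<partial>lborel) / h ^ CARD('d)"
proof -
  have hp: "h ^ CARD('d) > 0" using h by simp
  have U: "uniform_measure lborel (cube a0 h :: (real^'d::finite) set)
     = density lborel (\<lambda>x. ennreal (indicator (cube a0 h) x / h ^ CARD('d)))"
    unfolding uniform_measure_def emeasure_cube[OF h]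
    using divide_ennreal[of 1 "h ^ CARD('d)"] hp by (intro density_cong) (auto simp: indicator_def)
  have "(\<integral>x. f x \<partial>uniform_measure lborel (cube a0 h :: (real^'d::finite) set))
     = (\<integral>x. (indicator (cube a0 h) x / h ^ CARD('d)) *\<^sub>R f x \<partial>lborel)"
    unfolding U by (rule integral_density) (auto simp: hp intro!: divide_nonneg_pos)
  also have "\<dots> = (\<integral>x. indicator (cube a0 h) x * f x / h ^ CARD('d) \<partial>lborel)"
    by (intro Bochner_Integration.integral_cong) auto
  finally show ?thesis by simp
qed

section \<open>Orthonormality of the tensor Legendre basis on the cube\<close>

lemma integrable_indicator_Ioc_continuous:
  fixes G :: "real \<Rightarrow> real"
  assumes "continuous_on UNIV G"
  shows "integrable lborel (\<lambda>t. indicator {lo<..hi} t * G t)"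
proof -
  have "integrable lborel (\<lambda>t. indicator {lo..hi} t *\<^sub>R G t)"
    by (rule borel_integrable_compact) (auto intro: continuous_on_subset[OF assms])
  then have "integrable lborel (\<lambda>t. indicator {lo<..hi} t *\<^sub>R (indicator {lo..hi} t *\<^sub>R G t))"
    by (rule integrable_mult_indicator[rotated]) simp
  moreover have "(\<lambda>t. indicator {lo<..hi} t *\<^sub>R (indicator {lo..hi} t *\<^sub>R G t))
      = (\<lambda>t. indicator {lo<..hi} t * G t)"
    by (auto simp: indicator_def fun_eq_iff)
  ultimately show ?thesis by simp
qed

lemma lborel_integral_legendre_product:
  "(\<integral>y. indicator {-1<..1} y * (legendre j y * legendre k y) \<partial>lborel)
    = (if j = k then 2 / (2 * real j + 1) else 0)"
proof -
  let ?G = "\<lambda>y. legendre j y * legendre k y"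
  have c: "continuous_on {-1..1} ?G" by (intro continuous_intros continuous_on_legendre)
  have si: "set_integrable lborel {-1..1} ?G" by (rule borel_integrable_atLeastAtMost'[OF c])
  have "(\<integral>y. indicator {-1<..1} y * ?G y \<partial>lborel) = (\<integral>y. indicator {-1..1} y *\<^sub>R ?G y \<partial>lborel)"
    by (intro integral_cong_AE) (use AE_lborel_singleton[of "-1"] in \<open>auto simp: indicator_def\<close>)
  also have "\<dots> = integral {-1..1} ?G"
    using set_borel_integral_eq_integral(2)[OF si] by (simp add: set_lebesgue_integral_def)
  finally show ?thesis
    using legendre_orthogonal[of j k] legendre_norm[of j] by auto
qed

lemma lborel_integral_scaled_legendre_product:
  assumes h: "h > 0"
  shows "(\<integral>t. indicator {a - h/2<..a + h/2} t
        * (sqrt (2 * real j + 1) * legendre j ((t - a) / (h/2)))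
        * (sqrt (2 * real k + 1) * legendre k ((t - a) / (h/2))) \<partial>lborel)
     = (if j = k then h else 0)"
proof -
  let ?f = "\<lambda>t. indicator {a - h/2<..a + h/2} t
      * (sqrt (2 * real j + 1) * legendre j ((t - a) / (h/2)))
      * (sqrt (2 * real k + 1) * legendre k ((t - a) / (h/2)))"
  have "(\<integral>t. ?f t \<partial>lborel) = \<bar>h/2\<bar> *\<^sub>R (\<integral>y. ?f (a + h/2 * y) \<partial>lborel)"
    by (rule lborel_integral_real_affine) (use h in simp)
  also have "(\<lambda>y. ?f (a + h/2 * y)) = (\<lambda>y. (sqrt (2 * real j + 1) * sqrt (2 * real k + 1))
      * (indicator {-1<..1} y * (legendre j y * legendre k y)))"
  proof
    fix y
    have "a + h/2 * y \<in> {a - h/2<..a + h/2} \<longleftrightarrow> y \<in> {-1<..1}"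
    proof -
      have "a - h/2 < a + h/2 * y \<longleftrightarrow> (h/2) * (-1) < (h/2) * y" by linarith
      also have "\<dots> \<longleftrightarrow> -1 < y" using h by (simp only: mult_less_cancel_left_pos)
      finally show ?thesis using h by (simp add: mult_le_cancel_left1)
    qed
    then show "?f (a + h/2 * y) = (sqrt (2 * real j + 1) * sqrt (2 * real k + 1))
        * (indicator {-1<..1} y * (legendre j y * legendre k y))"
      using h by (simp add: indicator_def)
  qed
  also have "\<bar>h/2\<bar> *\<^sub>R (\<integral>y. (sqrt (2 * real j + 1) * sqrt (2 * real k + 1))
        * (indicator {-1<..1} y * (legendre j y * legendre k y)) \<partial>lborel)
      = h/2 * (sqrt (2 * real j + 1) * sqrt (2 * real k + 1))
        * (if j = k then 2 / (2 * real j + 1) else 0)"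
    using h by (simp add: lborel_integral_legendre_product del: legendre.simps)
  also have "\<dots> = (if j = k then h else 0)"
  proof (cases "j = k")
    case True
    have "sqrt (2 * real j + 1) * sqrt (2 * real j + 1) = 2 * real j + 1" by simp
    then show ?thesis using True by (simp add: field_simps)
  qed simp
  finally show ?thesis .
qed

lemma continuous_on_p_leg: "continuous_on S (p_leg j)"
  unfolding p_leg_def
  by (intro continuous_intros continuous_on_compose2[OF continuous_on_legendre]) auto

lemma continuous_on_eta: "continuous_on S (eta a0 h j)"
  unfolding eta_def divide_inverse
  by (intro continuous_on_compose2[OF continuous_on_p_leg[of UNIV]] continuous_intros) auto

lemma borel_measurable_eta [measurable]: "eta a0 h j \<in> borel_measurable borel"
  by (rule borel_measurable_continuous_onI[OF continuous_on_eta])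

lemma integral_eta_uniform_cube:
  assumes h: "h > 0"
  shows "(\<integral>x. eta a0 h j x * eta a0 h k x
      \<partial>uniform_measure lborel (cube a0 h :: (real^'d::finite) set)) = (if j = k then 1 else 0)"
proof -
  define q where "q d t = indicator {a0 $ d - h/2<..a0 $ d + h/2} t
      * (sqrt (2 * real (j d) + 1) * legendre (j d) ((t - a0 $ d) / (h/2)))
      * (sqrt (2 * real (k d) + 1) * legendre (k d) ((t - a0 $ d) / (h/2)))" for d t
  have pw: "indicator (cube a0 h) x * (eta a0 h j x * eta a0 h k x) = (\<Prod>d\<in>UNIV. q d (x $ d))"
    for x :: "real^'d"
    unfolding q_def indicator_cube[of a0 h x] eta_def p_leg_def by (simp add: prod.distrib)
  have qi: "integrable lborel (q d)" for d
    unfolding q_def mult.assoc divide_inverse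
    by (intro integrable_indicator_Ioc_continuous continuous_intros
        continuous_on_compose2[OF continuous_on_legendre]) auto
  have "(\<integral>x. indicator (cube a0 h) x * (eta a0 h j x * eta a0 h k x) \<partial>(lborel :: (real^'d) measure))
       = (\<Prod>d\<in>(UNIV::'d set). \<integral>t. q d t \<partial>lborel)"
    unfolding pw by (rule integral_lborel_prod_vec_nth[OF qi])
  also have "\<dots> = (\<Prod>d\<in>(UNIV::'d set). if j d = k d then h else 0)"
    unfolding q_def using lborel_integral_scaled_legendre_product[OF h] by simp
  also have "\<dots> = (if j = k then h ^ CARD('d) else 0)"
    by (auto simp: fun_eq_iff intro: prod_zero)
  finally show ?thesis
    using h by (simp add: integral_uniform_cube)
qed

lemma supp_measure_subset:
  fixes M :: "'a::metric_space measure"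
  assumes sets: "sets M = sets borel" and "closed T" and AE: "AE x in M. x \<in> T"
  shows "supp_measure M \<subseteq> T"
proof
  fix x assume x: "x \<in> supp_measure M"
  show "x \<in> T"
  proof (rule ccontr)
    assume "x \<notin> T"
    then obtain e where e: "e > 0" "ball x e \<subseteq> - T"
      using \<open>closed T\<close> open_contains_ball[of "- T"] by (auto simp: closed_def)
    have "AE y in M. \<not> y \<in> ball x e" using AE by eventually_elim (use e(2) in auto)
    then have "emeasure M {y \<in> space M. y \<in> ball x e} = 0" by (rule emeasure_eq_0_AE)
    moreover have "space M = UNIV" using sets_eq_imp_space_eq[OF sets] by simp
    moreover have "emeasure M (ball x e) > 0" using x e(1) unfolding supp_measure_def by blast
    ultimately show False by (simp add: ball_def)
  qed
qed

lemma supp_measure_nonempty: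
  fixes M :: "'a::metric_space measure"
  assumes "prob_space M" and sets: "sets M = sets borel" and "compact T" and AE: "AE x in M. x \<in> T"
  shows "supp_measure M \<noteq> {}"
proof
  interpret prob_space M by fact
  assume "supp_measure M = {}"
  then have "\<forall>x. \<exists>e>0. emeasure M (ball x e) = 0" unfolding supp_measure_def by auto
  then obtain E where E: "\<And>x. E x > 0" "\<And>x. emeasure M (ball x (E x)) = 0" by metis
  have "T \<subseteq> (\<Union>c\<in>T. ball c (E c))" using E(1) by auto
  then obtain C where C: "C \<subseteq> T" "finite C" "T \<subseteq> (\<Union>c\<in>C. ball c (E c))"
    using compactE_image[OF \<open>compact T\<close>, of T "\<lambda>c. ball c (E c)"] by blast
  have "emeasure M T \<le> emeasure M (\<Union>c\<in>C. ball c (E c))"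
    by (intro emeasure_mono C(3)) (auto simp: sets intro!: borel_open)
  also have "\<dots> \<le> (\<Sum>c\<in>C. emeasure M (ball c (E c)))"
    by (intro emeasure_subadditive_finite C(2)) (auto simp: sets)
  also have "\<dots> = 0" using E(2) by simp
  finally have "emeasure M T = 0" by simp
  moreover have "emeasure M T = 1"
    using AE compact_imp_closed[OF \<open>compact T\<close>] by (intro emeasure_eq_1_AE) (auto simp: sets)
  ultimately show False by simp
qed

section \<open>The law of one Euler step started uniformly on the cube\<close>

definition euler_step ::
  "(real^'d \<Rightarrow> real^'d) \<Rightarrow> (real^'d \<Rightarrow> real^'d^'d) \<Rightarrow> real \<Rightarrow> real \<Rightarrow> (real^'d) \<times> (real^'d)
     \<Rightarrow> real^'d::finite" where
  "euler_step b \<sigma> r \<Delta> = (\<lambda>(u, \<xi>). u + \<Delta> *\<^sub>R b u + sqrt \<Delta> *\<^sub>R (\<sigma> u *v trunc_vec r \<xi>))"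

definition cube_normal :: "real^'d::finite \<Rightarrow> real \<Rightarrow> ((real^'d) \<times> (real^'d)) measure" where
  "cube_normal a0 h = uniform_measure lborel (cube a0 h) \<Otimes>\<^sub>M std_normal_vec"

definition cube_coords :: "real^'d::finite \<Rightarrow> real \<Rightarrow> real^'d \<Rightarrow> real^'d" where
  "cube_coords a0 h x = (\<chi> d. (x $ d - a0 $ d) / (h / 2))"

definition step_bound :: "real \<Rightarrow> nat \<Rightarrow> real \<Rightarrow> real \<Rightarrow> real" where
  "step_bound C n r \<Delta> = \<Delta> * C + sqrt \<Delta> * C * (real n * \<bar>r\<bar>)"

lemma eta_eq_p_leg_cube_coords: "eta a0 h j x = p_leg j (cube_coords a0 h x)"
  by (simp add: eta_def cube_coords_def)

lemma Xlaw_eq_distr: "Xlaw b \<sigma> a0 h r \<Delta> = distr (cube_normal a0 h) borel (euler_step b \<sigma> r \<Delta>)"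
  by (simp add: Xlaw_def euler_step_def cube_normal_def)

lemma sets_Xlaw [measurable_cong]: "sets (Xlaw b \<sigma> a0 h r \<Delta>) = sets borel"
  by (simp add: Xlaw_def)

lemma borel_measurable_euler_step [measurable]:
  assumes [measurable]: "b \<in> borel_measurable borel" "\<sigma> \<in> borel_measurable borel"
  shows "euler_step b \<sigma> r \<Delta> \<in> borel_measurable (cube_normal a0 h)"
proof -
  have [measurable]: "trunc_vec r \<in> borel_measurable borel"
    unfolding trunc_vec_def by (rule borel_measurable_vec_componentwise) simp
  have [measurable]: "(\<lambda>z. \<sigma> (fst z) *v trunc_vec r (snd z))
      \<in> borel_measurable (uniform_measure lborel (cube a0 h) \<Otimes>\<^sub>M std_normal_vec)"
    unfolding matrix_vector_mult_def
    by (rule borel_measurable_vec_componentwise) (simp only: vec_lambda_beta, measurable)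
  show ?thesis unfolding euler_step_def split_beta' cube_normal_def by measurable
qed

lemma prob_space_cube_normal: "h > 0 \<Longrightarrow> prob_space (cube_normal a0 h)"
  unfolding cube_normal_def
  by (intro prob_space_pair prob_space_uniform_cube prob_space_std_normal_vec)

lemma AE_cube_normal_fst_in_cube:
  assumes h: "h > 0"
  shows "AE z in cube_normal (a0 :: real^'d::finite) h. fst z \<in> cube a0 h"
proof -
  interpret U: prob_space "uniform_measure lborel (cube a0 h)"
    by (rule prob_space_uniform_cube[OF h])
  interpret N: prob_space "std_normal_vec :: (real^'d) measure"
    by (rule prob_space_std_normal_vec)
  have "emeasure (cube_normal a0 h) ((UNIV - cube a0 h) \<times> UNIV)
      = emeasure (uniform_measure lborel (cube a0 h)) (UNIV - cube a0 h) * emeasure std_normal_vec UNIV"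
    unfolding cube_normal_def
    by (subst N.emeasure_pair_measure_Times) (auto simp: std_normal_vec_def)
  also have "emeasure (uniform_measure lborel (cube a0 h)) (UNIV - cube a0 h) = 0"
    by (subst emeasure_uniform_measure) auto
  finally show ?thesis
    by (intro AE_I[where N = "(UNIV - cube a0 h) \<times> UNIV"])
       (auto simp: cube_normal_def std_normal_vec_def)
qed

lemma integral_cube_normal_fst:
  assumes h: "h > 0" and [measurable]: "f \<in> borel_measurable borel"
  shows "(\<integral>z. f (fst z) \<partial>cube_normal (a0 :: real^'d::finite) h)
    = (\<integral>u. (f u :: real) \<partial>uniform_measure lborel (cube a0 h))"
proof -
  interpret N: prob_space "std_normal_vec :: (real^'d) measure" by (rule prob_space_std_normal_vec)
  have "(\<integral>z. f (fst z) \<partial>cube_normal a0 h)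
      = (\<integral>u. f u \<partial>distr (cube_normal a0 h) (uniform_measure lborel (cube a0 h)) fst)"
    by (subst integral_distr) (auto simp: cube_normal_def)
  also have "distr (cube_normal a0 h) (uniform_measure lborel (cube a0 h)) fst
      = uniform_measure lborel (cube a0 h)"
    unfolding cube_normal_def by (rule N.distr_pair_fst)
  finally show ?thesis .
qed

lemma norm_trunc_vec_le: "norm (trunc_vec r (x :: real^'d::finite)) \<le> real CARD('d) * \<bar>r\<bar>"
proof -
  have "norm (trunc_vec r x) \<le> (\<Sum>i\<in>UNIV. \<bar>trunc_vec r x $ i\<bar>)" by (rule norm_le_l1_cart)
  also have "\<dots> \<le> (\<Sum>i\<in>(UNIV::'d set). \<bar>r\<bar>)" by (intro sum_mono) (simp add: trunc_vec_def)
  finally show ?thesis by simp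
qed

lemma coefficient_bound_nonneg:
  fixes b :: "real^'d::finite \<Rightarrow> real^'d" and \<sigma> :: "real^'d \<Rightarrow> real^'d^'d"
  assumes "\<forall>u. norm (b u) + onorm (\<lambda>x. \<sigma> u *v x) \<le> C"
  shows "0 \<le> C"
proof -
  have "0 \<le> onorm (\<lambda>x. \<sigma> 0 *v x)" by (rule onorm_pos_le[OF matrix_vector_mul_bounded_linear])
  then show ?thesis using assms[rule_format, of 0] norm_ge_zero[of "b 0"] by linarith
qed

lemma norm_euler_step_diff_le:
  fixes b :: "real^'d::finite \<Rightarrow> real^'d" and \<sigma> :: "real^'d \<Rightarrow> real^'d^'d"
  assumes bound: "\<forall>u. norm (b u) + onorm (\<lambda>x. \<sigma> u *v x) \<le> C" and \<Delta>: "\<Delta> \<ge> 0"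
  shows "norm (euler_step b \<sigma> r \<Delta> (u, \<xi>) - u) \<le> step_bound C CARD('d) r \<Delta>"
proof -
  have bl: "bounded_linear (\<lambda>x. \<sigma> u *v x)" by (rule matrix_vector_mul_bounded_linear)
  have on: "0 \<le> onorm (\<lambda>x. \<sigma> u *v x)" by (rule onorm_pos_le[OF bl])
  have bC: "norm (b u) \<le> C" and oC: "onorm (\<lambda>x. \<sigma> u *v x) \<le> C"
    using bound[rule_format, of u] on norm_ge_zero[of "b u"] by linarith+
  have "norm (\<sigma> u *v trunc_vec r \<xi>) \<le> onorm (\<lambda>x. \<sigma> u *v x) * norm (trunc_vec r \<xi>)"
    by (rule onorm[OF bl])
  also have "\<dots> \<le> C * (real CARD('d) * \<bar>r\<bar>)"
    by (intro mult_mono oC norm_trunc_vec_le) (use on coefficient_bound_nonneg[OF bound] in auto)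
  finally have s: "norm (\<sigma> u *v trunc_vec r \<xi>) \<le> C * (real CARD('d) * \<bar>r\<bar>)" .
  have "norm (euler_step b \<sigma> r \<Delta> (u, \<xi>) - u)
      = norm (\<Delta> *\<^sub>R b u + sqrt \<Delta> *\<^sub>R (\<sigma> u *v trunc_vec r \<xi>))"
    by (simp add: euler_step_def)
  also have "\<dots> \<le> norm (\<Delta> *\<^sub>R b u) + norm (sqrt \<Delta> *\<^sub>R (\<sigma> u *v trunc_vec r \<xi>))"
    by (rule norm_triangle_ineq)
  also have "\<dots> = \<Delta> * norm (b u) + sqrt \<Delta> * norm (\<sigma> u *v trunc_vec r \<xi>)" using \<Delta> by simp
  also have "\<dots> \<le> \<Delta> * C + sqrt \<Delta> * (C * (real CARD('d) * \<bar>r\<bar>))"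
    by (intro add_mono mult_left_mono bC s) (use \<Delta> in auto)
  finally show ?thesis by (simp add: step_bound_def mult.assoc)
qed

lemma AE_euler_step_near:
  fixes b :: "real^'d::finite \<Rightarrow> real^'d" and \<sigma> :: "real^'d \<Rightarrow> real^'d^'d"
  assumes "\<forall>u. norm (b u) + onorm (\<lambda>x. \<sigma> u *v x) \<le> C" "\<Delta> \<ge> 0" "h > 0"
  shows "AE z in cube_normal a0 h. fst z \<in> cube a0 h
    \<and> norm (euler_step b \<sigma> r \<Delta> z - fst z) \<le> step_bound C CARD('d) r \<Delta>"
  using AE_cube_normal_fst_in_cube[OF assms(3)]
proof eventually_elim
  case (elim z)
  obtain u \<xi> where "z = (u, \<xi>)" by fastforce
  then show ?case using elim norm_euler_step_diff_le[OF assms(1,2)] by simp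
qed

lemma norm_cube_coords_diff:
  assumes "h > 0"
  shows "norm (cube_coords a0 h y - cube_coords a0 h x) = norm (y - x) / (h / 2)"
proof -
  have "cube_coords a0 h y - cube_coords a0 h x = (2 / h) *\<^sub>R (y - x)"
    using assms by (simp add: cube_coords_def Finite_Cartesian_Product.vec_eq_iff field_simps)
  then show ?thesis using assms by simp
qed

lemma abs_cube_coords_nth: "h > 0 \<Longrightarrow> \<bar>cube_coords a0 h x $ d\<bar> = \<bar>x $ d - a0 $ d\<bar> / (h / 2)"
  by (simp add: cube_coords_def abs_divide del: times_divide_eq_right divide_divide_eq_right)

lemma abs_cube_coords_le_1:
  assumes "h > 0" "x \<in> cube a0 h"
  shows "\<bar>cube_coords a0 h x $ d\<bar> \<le> 1"
proof -
  have "a0 $ d - h / 2 < x $ d" "x $ d \<le> a0 $ d + h / 2" using assms(2) by (auto simp: cube_def)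
  then have "\<bar>x $ d - a0 $ d\<bar> \<le> h / 2" by (simp only: abs_le_iff) linarith
  then show ?thesis using assms(1) by (simp add: abs_cube_coords_nth divide_le_eq_1_pos)
qed

lemma AE_Xlaw_in_cbox:
  fixes b :: "real^'d::finite \<Rightarrow> real^'d" and \<sigma> :: "real^'d \<Rightarrow> real^'d^'d"
    and a0 :: "real^'d" and C h r \<Delta> :: real
  assumes [measurable]: "b \<in> borel_measurable borel" "\<sigma> \<in> borel_measurable borel"
    and "\<forall>u. norm (b u) + onorm (\<lambda>x. \<sigma> u *v x) \<le> C" "\<Delta> \<ge> 0" "h > 0"
  defines "c \<equiv> h / 2 + step_bound C CARD('d) r \<Delta>"
  shows "AE x in Xlaw b \<sigma> a0 h r \<Delta>. x \<in> cbox (\<chi> d. a0 $ d - c) (\<chi> d. a0 $ d + c)"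
proof -
  have "AE z in cube_normal a0 h. euler_step b \<sigma> r \<Delta> z \<in> cbox (\<chi> d. a0 $ d - c) (\<chi> d. a0 $ d + c)"
    using AE_euler_step_near[OF assms(3-5), of a0 r]
  proof eventually_elim
    case (elim z)
    have "a0 $ d - c \<le> euler_step b \<sigma> r \<Delta> z $ d \<and> euler_step b \<sigma> r \<Delta> z $ d \<le> a0 $ d + c" for d
    proof -
      have "\<bar>(euler_step b \<sigma> r \<Delta> z - fst z) $ d\<bar> \<le> norm (euler_step b \<sigma> r \<Delta> z - fst z)"
        by (rule component_le_norm_cart)
      moreover have "a0 $ d - h / 2 < fst z $ d" "fst z $ d \<le> a0 $ d + h / 2"
        using elim by (auto simp: cube_def)
      moreover have "norm (euler_step b \<sigma> r \<Delta> z - fst z) \<le> step_bound C CARD('d) r \<Delta>"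
        using elim by simp
      ultimately show ?thesis unfolding c_def by (simp only: abs_le_iff vector_minus_component) linarith
    qed
    then show ?case by (simp add: mem_box_cart)
  qed
  then show ?thesis unfolding Xlaw_eq_distr by (subst AE_distr_iff) simp_all
qed

lemma abs_cube_coords_supp_Xlaw_le:
  fixes b :: "real^'d::finite \<Rightarrow> real^'d" and \<sigma> :: "real^'d \<Rightarrow> real^'d^'d"
  assumes "b \<in> borel_measurable borel" "\<sigma> \<in> borel_measurable borel"
    and "\<forall>u. norm (b u) + onorm (\<lambda>x. \<sigma> u *v x) \<le> C" "\<Delta> \<ge> 0" "h > 0"
    and x: "x \<in> supp_measure (Xlaw b \<sigma> a0 h r \<Delta>)"
  shows "\<bar>cube_coords a0 h x $ d\<bar> \<le> 1 + step_bound C CARD('d) r \<Delta> / (h / 2)"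
proof -
  let ?c = "h / 2 + step_bound C CARD('d) r \<Delta>"
  have "x \<in> cbox (\<chi> d. a0 $ d - ?c) (\<chi> d. a0 $ d + ?c)"
    using supp_measure_subset[OF sets_Xlaw closed_cbox AE_Xlaw_in_cbox[OF assms(1-5)]] x by blast
  then have "a0 $ d - ?c \<le> x $ d" "x $ d \<le> a0 $ d + ?c" unfolding mem_box_cart by auto
  then have "\<bar>x $ d - a0 $ d\<bar> \<le> ?c" by (simp only: abs_le_iff) linarith
  then have "\<bar>x $ d - a0 $ d\<bar> / (h / 2) \<le> ?c / (h / 2)"
    using \<open>h > 0\<close> by (intro divide_right_mono) auto
  then show ?thesis
    using \<open>h > 0\<close> by (simp add: abs_cube_coords_nth add_divide_distrib)
qed

lemma supp_Xlaw_nonempty: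
  fixes b :: "real^'d::finite \<Rightarrow> real^'d" and \<sigma> :: "real^'d \<Rightarrow> real^'d^'d"
  assumes [measurable]: "b \<in> borel_measurable borel" "\<sigma> \<in> borel_measurable borel"
    and "\<forall>u. norm (b u) + onorm (\<lambda>x. \<sigma> u *v x) \<le> C" "\<Delta> \<ge> 0" "h > 0"
  shows "supp_measure (Xlaw b \<sigma> a0 h r \<Delta>) \<noteq> {}"
proof (rule supp_measure_nonempty[OF _ sets_Xlaw compact_cbox AE_Xlaw_in_cbox[OF assms]])
  interpret prob_space "cube_normal a0 h" by (rule prob_space_cube_normal) fact
  show "prob_space (Xlaw b \<sigma> a0 h r \<Delta>)"
    unfolding Xlaw_eq_distr by (rule prob_space_distr) simp
qed

lemma (in prob_space) abs_integral_diff_le: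
  fixes f g :: "'a \<Rightarrow> real"
  assumes [measurable]: "f \<in> borel_measurable M" "g \<in> borel_measurable M"
    and "AE x in M. \<bar>f x\<bar> \<le> B" "AE x in M. \<bar>g x\<bar> \<le> B" and diff: "AE x in M. \<bar>f x - g x\<bar> \<le> e"
  shows "\<bar>(\<integral>x. f x \<partial>M) - (\<integral>x. g x \<partial>M)\<bar> \<le> e"
proof -
  have int: "integrable M f" "integrable M g"
    using assms(3,4) by (auto intro!: integrable_const_bound[of _ B])
  then have "\<bar>(\<integral>x. f x \<partial>M) - (\<integral>x. g x \<partial>M)\<bar> = \<bar>\<integral>x. f x - g x \<partial>M\<bar>" by simp
  also have "\<dots> \<le> (\<integral>x. \<bar>f x - g x\<bar> \<partial>M)" by (rule integral_abs_bound)
  also have "\<dots> \<le> (\<integral>x. e \<partial>M)" by (rule integral_mono_AE) (use int diff in auto)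
  finally show ?thesis by (simp add: prob_space)
qed

definition closed_box2 :: "(real^'d::finite) set" where
  "closed_box2 = {y. \<forall>d. \<bar>y $ d\<bar> \<le> 2}"

lemma compact_closed_box2: "compact (closed_box2 :: (real^'d::finite) set)"
proof -
  have "closed_box2 = cbox (\<chi> d. -2) (\<chi> d. 2 :: real^'d)"
    unfolding closed_box2_def set_eq_iff mem_box_cart mem_Collect_eq vec_lambda_beta
    by (intro allI iff_allI) (auto simp: abs_le_iff)
  then show ?thesis using compact_cbox by metis
qed

lemma mem_closed_box2:
  assumes "\<And>d. \<bar>y $ d\<bar> \<le> 1 + s" "s \<le> 1"
  shows "y \<in> closed_box2"
  unfolding closed_box2_def
proof (intro CollectI allI)
  show "\<bar>y $ d\<bar> \<le> 2" for d using assms(1)[of d] assms(2) by linarith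
qed

lemma abs_vec_nth_le_add_norm_diff: "\<bar>y' $ d\<bar> \<le> \<bar>y $ d\<bar> + norm (y' - y)"
  using component_le_norm_cart[of "y' - y" d] by simp

lemma AE_cube_coords_euler_step_near:
  fixes b :: "real^'d::finite \<Rightarrow> real^'d" and \<sigma> :: "real^'d \<Rightarrow> real^'d^'d"
    and a0 :: "real^'d" and C h r \<Delta> :: real
  assumes bound: "\<forall>u. norm (b u) + onorm (\<lambda>x. \<sigma> u *v x) \<le> C" and \<Delta>: "\<Delta> \<ge> 0" and h: "h > 0"
  defines "s \<equiv> step_bound C CARD('d) r \<Delta> / (h / 2)"
  assumes "s \<le> 1"
  shows "AE z in cube_normal a0 h. cube_coords a0 h (fst z) \<in> closed_box2
    \<and> cube_coords a0 h (euler_step b \<sigma> r \<Delta> z) \<in> closed_box2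
    \<and> dist (cube_coords a0 h (euler_step b \<sigma> r \<Delta> z)) (cube_coords a0 h (fst z)) \<le> s"
  using AE_euler_step_near[OF bound \<Delta> h, of a0 r]
proof eventually_elim
  case (elim z)
  let ?y = "cube_coords a0 h (fst z)" and ?y' = "cube_coords a0 h (euler_step b \<sigma> r \<Delta> z)"
  have y: "\<bar>?y $ d\<bar> \<le> 1" for d using abs_cube_coords_le_1[OF h] elim by blast
  have ny: "norm (?y' - ?y) \<le> s"
    using elim h unfolding norm_cube_coords_diff[OF h] s_def by (auto intro: divide_right_mono)
  have "\<bar>?y' $ d\<bar> \<le> 1 + s" for d
    using abs_vec_nth_le_add_norm_diff[of ?y' d ?y] y[of d] ny by linarith
  then have "?y' \<in> closed_box2" using \<open>s \<le> 1\<close> by (rule mem_closed_box2)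
  moreover have "?y \<in> closed_box2" using y by (intro mem_closed_box2[of _ 0]) auto
  ultimately show ?case using ny by (simp add: dist_norm)
qed

lemma gram_Xlaw_near_identity:
  fixes b :: "real^'d::finite \<Rightarrow> real^'d" and \<sigma> :: "real^'d \<Rightarrow> real^'d^'d"
    and a0 :: "real^'d" and C h r \<Delta> u e :: real
  assumes [measurable]: "b \<in> borel_measurable borel" "\<sigma> \<in> borel_measurable borel"
    and bound: "\<forall>u. norm (b u) + onorm (\<lambda>x. \<sigma> u *v x) \<le> C" and \<Delta>: "\<Delta> \<ge> 0" and h: "h > 0"
    and uc: "\<forall>y\<in>closed_box2. \<forall>y'\<in>closed_box2. dist y' y < u
        \<longrightarrow> dist (p_leg j y' * p_leg k y') (p_leg j y * p_leg k y) < e"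
  defines "s \<equiv> step_bound C CARD('d) r \<Delta> / (h / 2)"
  assumes "s \<le> 1" "s < u"
  shows "\<bar>gram (Xlaw b \<sigma> a0 h r \<Delta>) a0 h j k - (if j = k then 1 else 0)\<bar> \<le> e"
proof -
  let ?P = "cube_normal a0 h" and ?F = "euler_step b \<sigma> r \<Delta>"
  define G where "G y = p_leg j y * p_leg k y" for y
  define g where "g x = G (cube_coords a0 h x)" for x
  interpret P: prob_space ?P by (rule prob_space_cube_normal[OF h])
  have [measurable]: "g \<in> borel_measurable borel"
    unfolding g_def G_def eta_eq_p_leg_cube_coords[symmetric] by simp
  have "continuous_on closed_box2 G" unfolding G_def by (intro continuous_intros continuous_on_p_leg)
  from compact_imp_bounded[OF compact_continuous_image[OF this compact_closed_box2]]
  obtain B where B: "\<forall>y\<in>closed_box2. \<bar>G y\<bar> \<le> B"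
    unfolding bounded_iff by auto
  note near = AE_cube_coords_euler_step_near[OF bound \<Delta> h \<open>s \<le> 1\<close>[unfolded s_def], of a0,
      folded s_def]
  have "gram (Xlaw b \<sigma> a0 h r \<Delta>) a0 h j k = (\<integral>x. g x \<partial>distr ?P borel ?F)"
    unfolding gram_def Xlaw_eq_distr g_def G_def eta_eq_p_leg_cube_coords ..
  also have "\<dots> = (\<integral>z. g (?F z) \<partial>?P)" by (rule integral_distr) simp_all
  finally have gram_eq: "gram (Xlaw b \<sigma> a0 h r \<Delta>) a0 h j k = (\<integral>z. g (?F z) \<partial>?P)" .
  have "(\<integral>z. g (fst z) \<partial>?P) = (if j = k then 1 else 0)"
    unfolding integral_cube_normal_fst[OF h \<open>g \<in> borel_measurable borel\<close>]
    unfolding g_def G_def eta_eq_p_leg_cube_coords[symmetric] by (rule integral_eta_uniform_cube[OF h])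
  moreover have "\<bar>(\<integral>z. g (?F z) \<partial>?P) - (\<integral>z. g (fst z) \<partial>?P)\<bar> \<le> e"
  proof (rule P.abs_integral_diff_le[of _ _ B])
    show "(\<lambda>z. g (fst z)) \<in> borel_measurable ?P" by (simp add: cube_normal_def)
    show "AE z in ?P. \<bar>g (?F z)\<bar> \<le> B" "AE z in ?P. \<bar>g (fst z)\<bar> \<le> B"
      using near by (eventually_elim, use B in \<open>simp add: g_def\<close>)+
    show "AE z in ?P. \<bar>g (?F z) - g (fst z)\<bar> \<le> e"
      using near
    proof eventually_elim
      case (elim z)
      with uc \<open>s < u\<close> have "dist (G (cube_coords a0 h (?F z))) (G (cube_coords a0 h (fst z))) < e"
        unfolding G_def by fastforce
      then show ?case by (simp add: g_def dist_real_def)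
    qed
  qed simp
  ultimately show ?thesis using gram_eq by simp
qed

lemma p_leg_square_le:
  assumes "\<And>d. \<bar>y $ d\<bar> \<le> 1"
  shows "(p_leg j y)^2 \<le> (\<Prod>d\<in>UNIV. 2 * real (j d) + 1)"
proof -
  have "(p_leg j y)^2 = (\<Prod>d\<in>UNIV. (2 * real (j d) + 1) * (legendre (j d) (y $ d))^2)"
    unfolding p_leg_def prod_power_distrib by (intro prod.cong) (auto simp: power_mult_distrib)
  also have "\<dots> \<le> (\<Prod>d\<in>UNIV. (2 * real (j d) + 1))"
    by (intro prod_mono conjI mult_nonneg_nonneg mult_left_le)
       (use assms legendre_square_le_1 in auto)
  finally show ?thesis .
qed

lemma norm_diff_trunc_vec_1_le:
  fixes y :: "real^'d::finite"
  assumes "\<And>d. \<bar>y $ d\<bar> \<le> 1 + s" "0 \<le> s"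
  shows "norm (y - trunc_vec 1 y) \<le> real CARD('d) * s"
proof -
  have "norm (y - trunc_vec 1 y) \<le> (\<Sum>d\<in>UNIV. \<bar>(y - trunc_vec 1 y) $ d\<bar>)" by (rule norm_le_l1_cart)
  also have "\<dots> \<le> (\<Sum>d\<in>(UNIV::'d set). s)"
  proof (intro sum_mono)
    show "\<bar>(y - trunc_vec 1 y) $ d\<bar> \<le> s" for d
      using assms(1)[of d] assms(2) by (auto simp: trunc_vec_def abs_le_iff max_def min_def)
  qed
  finally show ?thesis by simp
qed

lemma m_sup_Xlaw_le:
  fixes b :: "real^'d::finite \<Rightarrow> real^'d" and \<sigma> :: "real^'d \<Rightarrow> real^'d^'d"
    and a0 :: "real^'d" and C h r \<Delta> u e :: real and Q :: nat
  assumes [measurable]: "b \<in> borel_measurable borel" "\<sigma> \<in> borel_measurable borel"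
    and bound: "\<forall>u. norm (b u) + onorm (\<lambda>x. \<sigma> u *v x) \<le> C" and \<Delta>: "\<Delta> \<ge> 0" and h: "h > 0"
  defines "H \<equiv> \<lambda>y. \<Sum>j\<in>(multi_idx Q :: ('d \<Rightarrow> nat) set). (p_leg j y)^2"
    and "s \<equiv> step_bound C CARD('d) r \<Delta> / (h / 2)"
  assumes uc: "\<forall>y\<in>closed_box2. \<forall>y'\<in>closed_box2. dist y' y < u \<longrightarrow> dist (H y') (H y) < e"
    and "s \<le> 1" "s < u / real CARD('d)"
  shows "0 \<le> m_sup (Xlaw b \<sigma> a0 h r \<Delta>) a0 h Q
    \<and> m_sup (Xlaw b \<sigma> a0 h r \<Delta>) a0 h Q
      \<le> (\<Sum>j\<in>(multi_idx Q :: ('d \<Rightarrow> nat) set). \<Prod>d\<in>UNIV. 2 * real (j d) + 1) + e"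
proof -
  let ?S0 = "\<Sum>j\<in>(multi_idx Q :: ('d \<Rightarrow> nat) set). \<Prod>d\<in>UNIV. 2 * real (j d) + 1"
  let ?V = "supp_measure (Xlaw b \<sigma> a0 h r \<Delta>)"
  have "0 \<le> s" unfolding s_def step_bound_def
    using coefficient_bound_nonneg[OF bound] \<Delta> h by (intro divide_nonneg_pos) auto
  have le: "H (cube_coords a0 h x) \<le> ?S0 + e" if x: "x \<in> ?V" for x
  proof -
    let ?y = "cube_coords a0 h x"
    have y: "\<bar>?y $ d\<bar> \<le> 1 + s" for d
      unfolding s_def by (rule abs_cube_coords_supp_Xlaw_le[OF assms(1-5) x])
    have t: "\<bar>trunc_vec 1 ?y $ d\<bar> \<le> 1" for d by (simp add: trunc_vec_def)
    have "real CARD('d) * s < u" using \<open>s < u / real CARD('d)\<close> by (simp add: field_simps)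
    then have "dist ?y (trunc_vec 1 ?y) < u"
      using norm_diff_trunc_vec_1_le[OF y \<open>0 \<le> s\<close>] by (simp add: dist_norm)
    moreover have "?y \<in> closed_box2" using y \<open>s \<le> 1\<close> by (rule mem_closed_box2)
    moreover have "trunc_vec 1 ?y \<in> closed_box2" using t by (intro mem_closed_box2[of _ 0]) auto
    ultimately have "H ?y < H (trunc_vec 1 ?y) + e" using uc by (force simp: dist_real_def)
    moreover have "H (trunc_vec 1 ?y) \<le> ?S0" unfolding H_def by (intro sum_mono p_leg_square_le t)
    ultimately show ?thesis by linarith
  qed
  have m: "m_sup (Xlaw b \<sigma> a0 h r \<Delta>) a0 h Q = (SUP x\<in>?V. H (cube_coords a0 h x))"
    unfolding m_sup_def H_def eta_eq_p_leg_cube_coords ..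
  obtain x0 where "x0 \<in> ?V" using supp_Xlaw_nonempty[OF assms(1-5)] by blast
  moreover have "bdd_above ((\<lambda>x. H (cube_coords a0 h x)) ` ?V)" using le by (intro bdd_aboveI2)
  ultimately have "H (cube_coords a0 h x0) \<le> (SUP x\<in>?V. H (cube_coords a0 h x))"
    by (intro cSUP_upper)
  moreover have "0 \<le> H (cube_coords a0 h x0)" unfolding H_def by (intro sum_nonneg) auto
  moreover have "(SUP x\<in>?V. H (cube_coords a0 h x)) \<le> ?S0 + e"
    using le \<open>x0 \<in> ?V\<close> by (intro cSUP_least) auto
  ultimately show ?thesis unfolding m by linarith
qed

section \<open>Eigenvalues of real symmetric matrices\<close>

lemma is_eigenvalue_on_reindex:
  assumes f: "bij_betw f I J"
  shows "is_eigenvalue_on I (\<lambda>i i'. A (f i) (f i')) l \<longleftrightarrow> is_eigenvalue_on J A l"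
proof
  have sum_J: "(\<Sum>\<kappa>\<in>J. g \<kappa>) = (\<Sum>i\<in>I. g (f i))" for g :: "_ \<Rightarrow> real"
    using sum.reindex_bij_betw[OF f, of g] by simp
  define g where "g = inv_into I f"
  have gf: "g (f i) = i" if "i \<in> I" for i
    using f that unfolding g_def by (auto simp: bij_betw_def inv_into_f_f)
  have fg: "f (g k) = k" "g k \<in> I" if "k \<in> J" for k
    using f that unfolding g_def by (auto simp: bij_betw_def f_inv_into_f inv_into_into)
  assume "is_eigenvalue_on I (\<lambda>i i'. A (f i) (f i')) l"
  then obtain v where v: "\<exists>i\<in>I. v i \<noteq> 0" "\<forall>i\<in>I. (\<Sum>i'\<in>I. A (f i) (f i') * v i') = l * v i"
    unfolding is_eigenvalue_on_def by blast
  show "is_eigenvalue_on J A l" unfolding is_eigenvalue_on_def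
  proof (intro exI[of _ "\<lambda>k. v (g k)"] conjI ballI)
    show "\<exists>k\<in>J. v (g k) \<noteq> 0" using v(1) gf f by (metis bij_betwE)
    fix k assume k: "k \<in> J"
    have "(\<Sum>\<kappa>\<in>J. A k \<kappa> * v (g \<kappa>)) = (\<Sum>i'\<in>I. A (f (g k)) (f i') * v i')"
      unfolding sum_J fg(1)[OF k] by (intro sum.cong) (auto simp: gf)
    also have "\<dots> = l * v (g k)" using v(2) fg(2)[OF k] by blast
    finally show "(\<Sum>\<kappa>\<in>J. A k \<kappa> * v (g \<kappa>)) = l * v (g k)" .
  qed
next
  have sum_J: "(\<Sum>\<kappa>\<in>J. g \<kappa>) = (\<Sum>i\<in>I. g (f i))" for g :: "_ \<Rightarrow> real"
    using sum.reindex_bij_betw[OF f, of g] by simp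
  assume "is_eigenvalue_on J A l"
  then obtain v where v: "\<exists>k\<in>J. v k \<noteq> 0" "\<forall>k\<in>J. (\<Sum>\<kappa>\<in>J. A k \<kappa> * v \<kappa>) = l * v k"
    unfolding is_eigenvalue_on_def by blast
  show "is_eigenvalue_on I (\<lambda>i i'. A (f i) (f i')) l" unfolding is_eigenvalue_on_def
  proof (intro exI[of _ "\<lambda>i. v (f i)"] conjI ballI)
    show "\<exists>i\<in>I. v (f i) \<noteq> 0" using v(1) f by (auto simp: bij_betw_def)
    fix i assume "i \<in> I"
    then show "(\<Sum>i'\<in>I. A (f i) (f i') * v (f i')) = l * v (f i)"
      using v(2) f sum_J by (auto simp: bij_betw_def)
  qed
qed

lemma is_eigenvalue_on_lessThan_in_spectrum:
  fixes A :: "nat \<Rightarrow> nat \<Rightarrow> real"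
  assumes "is_eigenvalue_on {..<n} A l"
  shows "l \<in> spectrum (Matrix.mat n n (\<lambda>(i, j). A i j))"
proof -
  from assms obtain v where v: "\<exists>i<n. v i \<noteq> 0" "\<forall>i<n. (\<Sum>j<n. A i j * v j) = l * v i"
    unfolding is_eigenvalue_on_def by auto
  have "eigenvector (Matrix.mat n n (\<lambda>(i, j). A i j)) (Matrix.vec n v) l"
    unfolding eigenvector_def
    using v by (auto simp: vec_eq_iff scalar_prod_def row_def lessThan_atLeast0)
  then show ?thesis unfolding spectrum_def eigenvalue_def by auto
qed

text \<open>A real symmetric matrix has a complex eigenvector for its complex eigenvalue \<open>\<mu>\<close>;
  \<open>\<mu>\<close> is real because \<open>w\<^sup>* A w = \<mu> |w|\<^sup>2\<close> is, and then the real or imaginary part of \<open>w\<close>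
  is a real eigenvector.\<close>

lemma ex_is_eigenvalue_on_lessThan_symmetric:
  fixes A :: "nat \<Rightarrow> nat \<Rightarrow> real"
  assumes n: "n > 0" and sym: "\<And>i j. i < n \<Longrightarrow> j < n \<Longrightarrow> A i j = A j i"
  shows "\<exists>l. is_eigenvalue_on {..<n} A l"
proof -
  let ?B = "Matrix.mat n n (\<lambda>(i,j). complex_of_real (A i j))"
  have "spectrum ?B \<noteq> {}" by (rule spectrum_non_empty[OF _ n]) simp
  then obtain mu w where ev: "eigenvector ?B w mu" unfolding spectrum_def eigenvalue_def by auto
  define W where "W i = vec_index w i" for i
  have wc: "w \<in> carrier_vec n" and wn: "w \<noteq> 0\<^sub>v n" and eq0: "?B *\<^sub>v w = mu \<cdot>\<^sub>v w"
    using ev unfolding eigenvector_def by auto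
  have Wnz: "\<exists>i<n. W i \<noteq> 0" using wc wn unfolding W_def by (auto simp: vec_eq_iff)
  have eq: "(\<Sum>j<n. complex_of_real (A i j) * W j) = mu * W i" if "i < n" for i
  proof -
    have "vec_index (?B *\<^sub>v w) i = vec_index (mu \<cdot>\<^sub>v w) i" using eq0 by simp
    then show ?thesis using that wc
      by (simp add: scalar_prod_def row_def W_def lessThan_atLeast0 mult.commute)
  qed
  define S where "S = (\<Sum>i<n. cnj (W i) * (\<Sum>j<n. complex_of_real (A i j) * W j))"
  define N where "N = (\<Sum>i<n. (cmod (W i))^2)"
  have S: "S = mu * complex_of_real N"
  proof -
    have "S = (\<Sum>i<n. cnj (W i) * (mu * W i))" unfolding S_def by (intro sum.cong) (auto simp: eq)
    also have "\<dots> = mu * (\<Sum>i<n. complex_of_real ((cmod (W i))^2))"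
      unfolding sum_distrib_left complex_norm_square by (intro sum.cong) (auto simp: algebra_simps)
    finally show ?thesis unfolding N_def by simp
  qed
  have "cnj S = (\<Sum>j<n. \<Sum>i<n. W i * complex_of_real (A i j) * cnj (W j))"
    unfolding S_def by (subst sum.swap) (simp add: sum_distrib_left mult.assoc)
  also have "\<dots> = S"
    unfolding S_def sum_distrib_left
    by (intro sum.cong refl) (simp add: sym mult.commute mult.left_commute)
  finally have "Im S = 0" by (metis Reals_cnj_iff complex_is_Real_iff)
  moreover have "N > 0" unfolding N_def using Wnz by (auto intro!: sum_pos2)
  ultimately have "Im mu = 0" unfolding S by simp
  then have mu: "mu = complex_of_real (Re mu)" by (simp add: complex_eq_iff)
  have eqRe: "(\<Sum>j<n. A i j * Re (W j)) = Re mu * Re (W i)"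
    and eqIm: "(\<Sum>j<n. A i j * Im (W j)) = Re mu * Im (W i)" if "i < n" for i
    using arg_cong[OF eq[OF that], of Re] arg_cong[OF eq[OF that], of Im]
    by (subst (asm) (1 2) mu, simp add: Re_sum Im_sum)+
  show ?thesis
  proof (cases "\<exists>i<n. Re (W i) \<noteq> 0")
    case True
    then show ?thesis unfolding is_eigenvalue_on_def
      by (intro exI[of _ "Re mu"] exI[of _ "\<lambda>j. Re (W j)"]) (use eqRe in auto)
  next
    case False
    then have "\<exists>i<n. Im (W i) \<noteq> 0" using Wnz by (auto simp: complex_eq_iff)
    then show ?thesis unfolding is_eigenvalue_on_def
      by (intro exI[of _ "Re mu"] exI[of _ "\<lambda>j. Im (W j)"]) (use eqIm in auto)
  qed
qed

lemma eigenvalues_on_finite_nonempty: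
  assumes "finite J" "J \<noteq> {}" and sym: "\<forall>j\<in>J. \<forall>k\<in>J. A j k = A k j"
  shows "finite {l. is_eigenvalue_on J A l} \<and> {l. is_eigenvalue_on J A l} \<noteq> {}"
proof -
  obtain f where f: "bij_betw f {..<card J} J"
    using ex_bij_betw_nat_finite[OF \<open>finite J\<close>] by (auto simp: lessThan_atLeast0)
  let ?B = "\<lambda>i i'. A (f i) (f i')"
  have E: "{l. is_eigenvalue_on J A l} = {l. is_eigenvalue_on {..<card J} ?B l}"
    using is_eigenvalue_on_reindex[OF f] by simp
  have "finite (spectrum (Matrix.mat (card J) (card J) (\<lambda>(i, j). ?B i j)))"
    by (rule card_finite_spectrum(1)[of _ "card J"]) simp
  then have "finite {l. is_eigenvalue_on {..<card J} ?B l}"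
    by (rule finite_subset[rotated]) (auto intro: is_eigenvalue_on_lessThan_in_spectrum)
  moreover have "\<exists>l. is_eigenvalue_on {..<card J} ?B l"
    using assms f by (intro ex_is_eigenvalue_on_lessThan_symmetric)
      (auto simp: card_gt_0_iff bij_betw_def)
  ultimately show ?thesis unfolding E by auto
qed

lemma eigenvalue_on_near_identity:
  assumes "finite J" and close: "\<forall>j\<in>J. \<forall>k\<in>J. \<bar>A j k - (if j = k then 1 else 0)\<bar> \<le> e"
    and "is_eigenvalue_on J A l"
  shows "\<bar>l - 1\<bar> \<le> real (card J) * e"
proof -
  from assms(3) obtain v where v: "\<exists>k\<in>J. v k \<noteq> 0" "\<forall>k\<in>J. (\<Sum>\<kappa>\<in>J. A k \<kappa> * v \<kappa>) = l * v k"
    unfolding is_eigenvalue_on_def by blast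
  define M where "M = Max ((\<lambda>k. \<bar>v k\<bar>) ` J)"
  have "M \<in> (\<lambda>k. \<bar>v k\<bar>) ` J" unfolding M_def using \<open>finite J\<close> v(1) by (intro Max_in) auto
  then obtain k0 where k0: "k0 \<in> J" "\<bar>v k0\<bar> = M" by auto
  have le: "\<bar>v k\<bar> \<le> M" if "k \<in> J" for k unfolding M_def using \<open>finite J\<close> that by simp
  have "M > 0" using v(1) le by force
  have "(\<Sum>\<kappa>\<in>J. (if k0 = \<kappa> then 1 else 0) * v \<kappa>) = (\<Sum>\<kappa>\<in>J. if k0 = \<kappa> then v \<kappa> else 0)"
    by (intro sum.cong) auto
  then have "(\<Sum>\<kappa>\<in>J. (if k0 = \<kappa> then 1 else 0) * v \<kappa>) = v k0" using k0(1) \<open>finite J\<close> by simp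
  then have "(l - 1) * v k0 = (\<Sum>\<kappa>\<in>J. A k0 \<kappa> * v \<kappa>) - (\<Sum>\<kappa>\<in>J. (if k0 = \<kappa> then 1 else 0) * v \<kappa>)"
    using v(2) k0(1) by (simp add: algebra_simps)
  also have "\<dots> = (\<Sum>\<kappa>\<in>J. (A k0 \<kappa> - (if k0 = \<kappa> then 1 else 0)) * v \<kappa>)"
    by (simp add: sum_subtractf left_diff_distrib)
  finally have "\<bar>l - 1\<bar> * M \<le> (\<Sum>\<kappa>\<in>J. \<bar>(A k0 \<kappa> - (if k0 = \<kappa> then 1 else 0)) * v \<kappa>\<bar>)"
    using k0(2) sum_abs by (metis abs_mult)
  also have "\<dots> \<le> (\<Sum>\<kappa>\<in>J. e * M)"
    unfolding abs_mult using close k0(1) le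
    by (intro sum_mono mult_mono) (auto intro: order_trans[OF abs_ge_zero])
  finally show ?thesis using \<open>M > 0\<close> by simp
qed

lemma lambda_min_max_near_identity:
  assumes "finite J" "J \<noteq> {}" "\<forall>j\<in>J. \<forall>k\<in>J. A j k = A k j"
    and "\<forall>j\<in>J. \<forall>k\<in>J. \<bar>A j k - (if j = k then 1 else 0)\<bar> \<le> e"
  shows "1 - real (card J) * e \<le> lambda_min_on J A \<and> lambda_min_on J A \<le> lambda_max_on J A
     \<and> lambda_max_on J A \<le> 1 + real (card J) * e"
proof -
  define E where "E = {l. is_eigenvalue_on J A l}"
  have "finite E" "E \<noteq> {}" using eigenvalues_on_finite_nonempty[OF assms(1-3)] by (auto simp: E_def)
  moreover have "\<bar>l - 1\<bar> \<le> real (card J) * e" if "l \<in> E" for l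
    using eigenvalue_on_near_identity[OF assms(1,4)] that by (auto simp: E_def)
  ultimately have "Min E \<in> E" "Max E \<in> E" "Min E \<le> Max E" "\<forall>l\<in>E. \<bar>l - 1\<bar> \<le> real (card J) * e"
    by auto
  then show ?thesis unfolding lambda_min_on_def lambda_max_on_def E_def[symmetric] by fastforce
qed

lemma finite_multi_idx: "finite (multi_idx Q :: ('d::finite \<Rightarrow> nat) set)"
proof (rule finite_subset[of _ "PiE UNIV (\<lambda>_. {..Q})"])
  show "multi_idx Q \<subseteq> PiE (UNIV :: 'd set) (\<lambda>_. {..Q})"
  proof
    fix j :: "'d \<Rightarrow> nat" assume "j \<in> multi_idx Q"
    moreover have "j d \<le> (\<Sum>d\<in>UNIV. j d)" for d by (rule member_le_sum) auto
    ultimately show "j \<in> PiE UNIV (\<lambda>_. {..Q})"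
      by (auto simp: multi_idx_def PiE_def extensional_def intro: order_trans)
  qed
qed (simp add: finite_PiE)

lemma zero_in_multi_idx: "(\<lambda>_. 0) \<in> multi_idx Q"
  by (simp add: multi_idx_def)

text \<open>The truncation level \<open>r\<^sub>2\<close> grows only like \<open>\<surd>(log \<Delta>\<inverse>)\<close>, so the noise term
  \<open>\<surd>\<Delta> r\<^sub>2\<close> is \<open>o(\<Delta>\<^bsup>\<gamma>\<^esup>)\<close> because \<open>\<gamma> < 1/2\<close>.\<close>

lemma step_bound_over_cube_tendsto_0:
  assumes "c_cube > 0" "0 < \<gamma>_cube" "\<gamma>_cube < 1/2" "c2t > 0" "\<gamma>2t > 0"
  shows "((\<lambda>\<Delta>. step_bound C n (r2_trunc c2t \<gamma>2t \<Delta>) \<Delta> / (h_cube c_cube \<gamma>_cube \<Delta> / 2))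
    \<longlongrightarrow> 0) (at_right 0)"
proof -
  let ?lg = "\<lambda>\<Delta>::real. sqrt (2 * ln (c2t * \<Delta> powr (- \<gamma>2t) * ln (1 / \<Delta>)))"
  have "filterlim (\<lambda>\<Delta>::real. c2t * \<Delta> powr (- \<gamma>2t) * ln (1 / \<Delta>)) at_top (at_right 0)"
    using assms by real_asymp
  then have "eventually (\<lambda>\<Delta>. c2t * \<Delta> powr (- \<gamma>2t) * ln (1 / \<Delta>) \<ge> 1) (at_right 0)"
    by (simp add: filterlim_at_top)
  moreover have "eventually (\<lambda>\<Delta>::real. \<Delta> > 0) (at_right 0)" by (simp add: eventually_at_right_less)
  ultimately have eq: "eventually (\<lambda>\<Delta>. (2 * C / c_cube) * (\<Delta> / \<Delta> powr \<gamma>_cube)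
       + (2 * C * real n / c_cube) * (sqrt \<Delta> * ?lg \<Delta> / \<Delta> powr \<gamma>_cube)
     = step_bound C n (r2_trunc c2t \<gamma>2t \<Delta>) \<Delta> / (h_cube c_cube \<gamma>_cube \<Delta> / 2)) (at_right 0)"
  proof eventually_elim
    case (elim \<Delta>)
    then have "\<bar>r2_trunc c2t \<gamma>2t \<Delta>\<bar> = ?lg \<Delta>" by (simp add: r2_trunc_def)
    then show ?case using assms elim by (simp add: step_bound_def h_cube_def field_simps)
  qed
  have l1: "((\<lambda>\<Delta>::real. \<Delta> / \<Delta> powr \<gamma>_cube) \<longlongrightarrow> 0) (at_right 0)"
    using assms by real_asymp
  have l2: "((\<lambda>\<Delta>::real. sqrt \<Delta> * ?lg \<Delta> / \<Delta> powr \<gamma>_cube) \<longlongrightarrow> 0) (at_right 0)"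
    using assms by real_asymp
  have "((\<lambda>\<Delta>. (2 * C / c_cube) * (\<Delta> / \<Delta> powr \<gamma>_cube)
       + (2 * C * real n / c_cube) * (sqrt \<Delta> * ?lg \<Delta> / \<Delta> powr \<gamma>_cube)) \<longlongrightarrow> 0) (at_right 0)"
    using tendsto_add[OF tendsto_mult_left[OF l1, of "2 * C / c_cube"]
        tendsto_mult_left[OF l2, of "2 * C * real n / c_cube"]]
    by (simp only: mult_zero_right add_0_right)
  then show ?thesis using tendsto_cong[OF eq] by blast
qed

section \<open>The arithmetic of the Bernstein exponent\<close>

text \<open>At \<open>\<delta> = 0\<close> this is \<open>8 S\<^sub>0 + 2 = 3 c\<^sup>*\<close>, which is where the constant \<open>c\<^sup>*\<close> comes from.\<close>

definition bernstein_denominator_bound :: "real \<Rightarrow> real \<Rightarrow> real" where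
  "bernstein_denominator_bound S0 \<delta> =
     6 * (S0 + \<delta>) * (1 + \<delta>) / (1 - \<delta>)^2 + 2 * (S0 + 1 + 2 * \<delta>) / (1 - \<delta>)"

lemma exists_delta_margin:
  fixes S0 c1p \<tau> :: real
  assumes "S0 \<ge> 0" and "0 < \<tau>" and \<tau>: "\<tau> < 1 - sqrt ((2/3 + 8/3 * S0) / c1p)"
    and c1p: "c1p > 2/3 + 8/3 * S0"
  shows "\<exists>\<delta>. 0 < \<delta> \<and> \<delta> < 1 - \<tau> \<and> \<delta> \<le> 1/2 \<and>
    (1 + \<delta>) * bernstein_denominator_bound S0 \<delta> \<le> 3 * c1p * (1 - \<tau> / (1 - \<delta>))^2"
proof -
  define cs where "cs = 2/3 + 8/3 * S0"
  have "cs > 0" "c1p > 0" using assms unfolding cs_def by linarith+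
  have "0 \<le> sqrt (cs / c1p)" using \<open>cs > 0\<close> \<open>c1p > 0\<close> by simp
  then have "1 - \<tau> > 0" using \<tau> unfolding cs_def by linarith
  have "cs / c1p = (sqrt (cs / c1p))^2"
    using \<open>cs > 0\<close> \<open>c1p > 0\<close> by (intro real_sqrt_pow2[symmetric] divide_nonneg_pos) auto
  also have "\<dots> < (1 - \<tau>)^2"
    using \<tau> \<open>cs > 0\<close> \<open>c1p > 0\<close> unfolding cs_def by (intro power_strict_mono) auto
  finally have "cs < c1p * (1 - \<tau>)^2" using \<open>c1p > 0\<close> by (simp add: field_simps)
  define \<phi> where "\<phi> \<delta> = 3 * c1p * (1 - \<tau> / (1 - \<delta>))^2 - (1 + \<delta>) * bernstein_denominator_bound S0 \<delta>"
    for \<delta> :: real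
  have "(\<phi> \<longlongrightarrow> \<phi> 0) (at_right 0)"
    unfolding \<phi>_def bernstein_denominator_bound_def by (intro tendsto_intros) auto
  moreover have "\<phi> 0 > 0"
    using \<open>cs < c1p * (1 - \<tau>)^2\<close> unfolding \<phi>_def bernstein_denominator_bound_def cs_def by simp
  ultimately have "eventually (\<lambda>\<delta>. \<phi> \<delta> > 0) (at_right 0)" by (rule order_tendstoD)
  moreover have "eventually (\<lambda>\<delta>::real. 0 < \<delta> \<and> \<delta> < min (1 - \<tau>) (1/2)) (at_right 0)"
    using \<open>1 - \<tau> > 0\<close> by (intro eventually_at_right_field[THEN iffD2] exI[of _ "min (1 - \<tau>) (1/2)"]) auto
  ultimately have "eventually (\<lambda>\<delta>. \<phi> \<delta> > 0 \<and> 0 < \<delta> \<and> \<delta> < min (1 - \<tau>) (1/2)) (at_right 0)"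
    by eventually_elim blast
  then obtain \<delta> where "\<phi> \<delta> > 0" "0 < \<delta>" "\<delta> < min (1 - \<tau>) (1/2)"
    using eventually_happens[of _ "at_right (0::real)"] by auto
  then show ?thesis unfolding \<phi>_def by (intro exI[of _ \<delta>]) auto
qed

lemma epsilon_bounds:
  fixes \<tau> \<delta> lmin :: real
  assumes "0 < \<tau>" "\<delta> < 1 - \<tau>" "\<delta> \<le> 1/2" "1 - \<delta> \<le> lmin" "lmin \<le> 1 + \<delta>"
  shows "0 < 1 - \<tau> / (1 - \<delta>)" "1 - \<tau> / (1 - \<delta>) \<le> 1 - \<tau> / lmin"
    "1 - \<tau> / lmin \<le> 1 - \<tau> / 2" "1 - \<tau> / lmin \<le> 1"
proof -
  have "lmin > 0" "1 - \<delta> > 0" using assms by linarith+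
  then show "0 < 1 - \<tau> / (1 - \<delta>)" "1 - \<tau> / lmin \<le> 1"
    using assms by (simp_all add: field_simps)
  have "\<tau> / lmin \<le> \<tau> / (1 - \<delta>)" using assms \<open>1 - \<delta> > 0\<close> by (intro divide_left_mono) auto
  then show "1 - \<tau> / (1 - \<delta>) \<le> 1 - \<tau> / lmin" by linarith
  have "\<tau> / 2 \<le> \<tau> / lmin" using assms \<open>lmin > 0\<close> by (intro divide_left_mono) auto
  then show "1 - \<tau> / lmin \<le> 1 - \<tau> / 2" by linarith
qed

lemma bernstein_denominator_le:
  assumes "0 < \<epsilon>" "\<epsilon> \<le> 1" "\<delta> \<le> 1/2" "1 - \<delta> \<le> lmin" "lmin \<le> lmax" "lmax \<le> 1 + \<delta>"
    "0 \<le> m" "m \<le> S0 + \<delta>"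
  shows "0 < 6 * m * lmax / lmin\<^sup>2 + 2 * \<epsilon> * (m / lmin + lmax / lmin)"
    and "6 * m * lmax / lmin\<^sup>2 + 2 * \<epsilon> * (m / lmin + lmax / lmin) \<le> bernstein_denominator_bound S0 \<delta>"
proof -
  have "lmin > 0" "lmax > 0" "1 - \<delta> > 0" using assms by linarith+
  then show "0 < 6 * m * lmax / lmin\<^sup>2 + 2 * \<epsilon> * (m / lmin + lmax / lmin)"
    using assms by (intro add_nonneg_pos) (auto intro!: divide_nonneg_pos mult_pos_pos add_nonneg_pos)
  have "6 * m * lmax / lmin\<^sup>2 \<le> 6 * (S0 + \<delta>) * (1 + \<delta>) / (1 - \<delta>)^2"
    using assms \<open>lmin > 0\<close> \<open>lmax > 0\<close> \<open>1 - \<delta> > 0\<close> by (intro frac_le mult_mono power_mono) auto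
  moreover have "m / lmin + lmax / lmin \<le> (S0 + 1 + 2 * \<delta>) / (1 - \<delta>)"
    unfolding add_divide_distrib[symmetric]
    using assms \<open>lmin > 0\<close> \<open>lmax > 0\<close> \<open>1 - \<delta> > 0\<close> by (intro frac_le) auto
  then have "2 * \<epsilon> * (m / lmin + lmax / lmin) \<le> 2 * 1 * ((S0 + 1 + 2 * \<delta>) / (1 - \<delta>))"
    using assms \<open>lmin > 0\<close> \<open>lmax > 0\<close> by (intro mult_mono) auto
  ultimately show "6 * m * lmax / lmin\<^sup>2 + 2 * \<epsilon> * (m / lmin + lmax / lmin)
      \<le> bernstein_denominator_bound S0 \<delta>"
    unfolding bernstein_denominator_bound_def by simp
qed

lemma exp_bernstein_exponent_le_powr:
  fixes \<Delta> c2p \<gamma>p c1p \<epsilon>0 \<epsilon> Den A \<delta> L :: real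
  assumes "0 < \<Delta>" "\<Delta> < c2p" "\<gamma>p > 0" "c1p > 0" "0 < \<epsilon>0" "\<epsilon>0 \<le> \<epsilon>" "0 < Den" "Den \<le> A"
    and key: "(1 + \<delta>) * A \<le> 3 * c1p * \<epsilon>0\<^sup>2" and L: "L \<ge> \<gamma>p * c1p * ln (c2p / \<Delta>)"
  shows "exp (- (3 * \<epsilon>\<^sup>2 * L) / Den) \<le> (\<Delta> / c2p) powr ((1 + \<delta>) * \<gamma>p)"
proof -
  define lg where "lg = ln (c2p / \<Delta>)"
  have "lg > 0" "L \<ge> 0" using assms unfolding lg_def by (auto intro: order_trans[rotated])
  have "3 * \<epsilon>0\<^sup>2 * (\<gamma>p * c1p * lg) / A \<le> 3 * \<epsilon>\<^sup>2 * L / Den"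
    using assms \<open>lg > 0\<close> \<open>L \<ge> 0\<close> unfolding lg_def[symmetric]
    by (intro frac_le mult_mono power_mono mult_nonneg_nonneg) auto
  moreover have "(1 + \<delta>) * \<gamma>p * lg \<le> 3 * \<epsilon>0\<^sup>2 * (\<gamma>p * c1p * lg) / A"
  proof -
    have "(1 + \<delta>) * A * (\<gamma>p * lg) \<le> 3 * c1p * \<epsilon>0\<^sup>2 * (\<gamma>p * lg)"
      using key assms \<open>lg > 0\<close> by (intro mult_right_mono) auto
    then show ?thesis using assms by (simp add: field_simps)
  qed
  ultimately have "exp (- (3 * \<epsilon>\<^sup>2 * L) / Den) \<le> exp (- ((1 + \<delta>) * \<gamma>p * lg))" by simp
  also have "\<dots> = (\<Delta> / c2p) powr ((1 + \<delta>) * \<gamma>p)"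
    using assms by (simp add: lg_def powr_def ln_div algebra_simps)
  finally show ?thesis .
qed

lemma concentration_bound_arith:
  fixes lmin lmax m K S0 \<delta> \<tau> c1p \<gamma>p c2p \<Delta> ch :: real
  assumes \<delta>: "0 < \<delta>" "\<delta> < 1 - \<tau>" "\<delta> \<le> 1/2" and "0 < \<tau>"
    and key: "(1 + \<delta>) * bernstein_denominator_bound S0 \<delta> \<le> 3 * c1p * (1 - \<tau> / (1 - \<delta>))^2"
    and \<lambda>: "1 - \<delta> \<le> lmin" "lmin \<le> lmax" "lmax \<le> 1 + \<delta>" and m: "0 \<le> m" "m \<le> S0 + \<delta>"
    and "c1p > 0" "\<gamma>p > 0" "c2p > 0" "0 < \<Delta>" "\<Delta> < c2p"
    and K: "K > 0" "K * (\<Delta> / c2p) powr (\<delta> * \<gamma>p) \<le> 1" and "ch \<ge> 1"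
  defines "\<epsilon> \<equiv> 1 - \<tau> / lmin" and "L \<equiv> real_of_int \<lceil>\<gamma>p * c1p * ln (c2p / \<Delta>)\<rceil>"
  shows "\<epsilon> \<in> {0<..1 - \<tau> / 2} \<and>
    2 * K * exp (- (3 * \<epsilon>\<^sup>2 * L) / (6 * m * lmax / lmin\<^sup>2 + 2 * \<epsilon> * (m / lmin + lmax / lmin)))
    \<le> 2 * ch / c2p powr \<gamma>p * \<Delta> powr \<gamma>p"
proof -
  note \<epsilon> = epsilon_bounds[OF \<open>0 < \<tau>\<close> \<delta>(2,3) \<lambda>(1) order_trans[OF \<lambda>(2,3)], folded \<epsilon>_def]
  note Den = bernstein_denominator_le[OF _ \<epsilon>(4) \<delta>(3) \<lambda> m]
  have "exp (- (3 * \<epsilon>\<^sup>2 * L) / (6 * m * lmax / lmin\<^sup>2 + 2 * \<epsilon> * (m / lmin + lmax / lmin)))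
      \<le> (\<Delta> / c2p) powr ((1 + \<delta>) * \<gamma>p)"
    using \<epsilon> assms Den unfolding L_def by (intro exp_bernstein_exponent_le_powr) auto
  also have "\<dots> = (\<Delta> / c2p) powr \<gamma>p * (\<Delta> / c2p) powr (\<delta> * \<gamma>p)"
    by (simp add: powr_add[symmetric] algebra_simps)
  finally have "2 * K * exp (- (3 * \<epsilon>\<^sup>2 * L) / (6 * m * lmax / lmin\<^sup>2 + 2 * \<epsilon> * (m / lmin + lmax / lmin)))
      \<le> 2 * (\<Delta> / c2p) powr \<gamma>p * (K * (\<Delta> / c2p) powr (\<delta> * \<gamma>p))"
    using K by (simp add: mult_left_mono mult.assoc mult.left_commute)
  also have "\<dots> \<le> 2 * (\<Delta> / c2p) powr \<gamma>p * ch"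
    using K \<open>ch \<ge> 1\<close> by (intro mult_left_mono) auto
  also have "\<dots> = 2 * ch / c2p powr \<gamma>p * \<Delta> powr \<gamma>p"
    using assms by (simp add: powr_divide)
  finally show ?thesis using \<epsilon> by auto
qed

lemma eventually_powr_small:
  assumes "a > 0" "c > 0"
  shows "eventually (\<lambda>\<Delta>. \<Delta> < c \<and> K * (\<Delta> / c) powr a \<le> 1) (at_right (0::real))"
proof -
  have "((\<lambda>\<Delta>::real. K * (\<Delta> / c) powr a) \<longlongrightarrow> 0) (at_right 0)"
    using assms by real_asymp
  then have "eventually (\<lambda>\<Delta>. K * (\<Delta> / c) powr a < 1) (at_right 0)"
    by (rule order_tendstoD) simp
  moreover have "eventually (\<lambda>\<Delta>::real. \<Delta> < c) (at_right 0)"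
    using assms by (intro eventually_at_right_field[THEN iffD2] exI[of _ c]) auto
  ultimately show ?thesis by eventually_elim auto
qed

context
  fixes b :: "real^'d::finite \<Rightarrow> real^'d" and \<sigma> :: "real^'d \<Rightarrow> real^'d^'d"
    and C c_cube \<gamma>_cube c2t \<gamma>2t :: real
  assumes b [measurable]: "b \<in> borel_measurable borel" and \<sigma> [measurable]: "\<sigma> \<in> borel_measurable borel"
    and bound: "\<forall>u. norm (b u) + onorm (\<lambda>x. \<sigma> u *v x) \<le> C"
    and cube: "c_cube > 0" "0 < \<gamma>_cube" "\<gamma>_cube < 1/2" and trunc: "c2t > 0" "\<gamma>2t > 0"
begin

lemma eventually_scaled_step_less:
  assumes "w > 0"
  shows "eventually (\<lambda>\<Delta>. 0 < \<Delta> \<and> h_cube c_cube \<gamma>_cube \<Delta> > 0 \<and>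
    step_bound C CARD('d) (r2_trunc c2t \<gamma>2t \<Delta>) \<Delta> / (h_cube c_cube \<gamma>_cube \<Delta> / 2) < w) (at_right 0)"
proof -
  have "eventually (\<lambda>\<Delta>. step_bound C CARD('d) (r2_trunc c2t \<gamma>2t \<Delta>) \<Delta>
      / (h_cube c_cube \<gamma>_cube \<Delta> / 2) < w) (at_right 0)"
    using order_tendstoD(2)[OF step_bound_over_cube_tendsto_0[OF cube trunc] assms] .
  moreover have "eventually (\<lambda>\<Delta>::real. 0 < \<Delta>) (at_right 0)" by (simp add: eventually_at_right_less)
  ultimately show ?thesis by eventually_elim (use cube in \<open>simp add: h_cube_def\<close>)
qed

lemma eventually_gram_entry_near:
  assumes "e > 0"
  shows "eventually (\<lambda>\<Delta>. \<bar>gram (Xlaw b \<sigma> a0 (h_cube c_cube \<gamma>_cube \<Delta>) (r2_trunc c2t \<gamma>2t \<Delta>) \<Delta>) a0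
    (h_cube c_cube \<gamma>_cube \<Delta>) j k - (if j = k then 1 else 0)\<bar> \<le> e) (at_right 0)"
proof -
  have "uniformly_continuous_on closed_box2 (\<lambda>y. p_leg j y * p_leg k y)"
    by (intro compact_uniformly_continuous compact_closed_box2 continuous_intros continuous_on_p_leg)
  then obtain u where "u > 0" and uc: "\<forall>y\<in>closed_box2. \<forall>y'\<in>closed_box2. dist y' y < u
      \<longrightarrow> dist (p_leg j y' * p_leg k y') (p_leg j y * p_leg k y) < e"
    unfolding uniformly_continuous_on_def using assms by metis
  have "0 < min u 1" using \<open>u > 0\<close> by simp
  from eventually_scaled_step_less[OF this] show ?thesis
  proof (elim eventually_mono)
    fix \<Delta> assume "0 < \<Delta> \<and> 0 < h_cube c_cube \<gamma>_cube \<Delta>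
      \<and> step_bound C CARD('d) (r2_trunc c2t \<gamma>2t \<Delta>) \<Delta> / (h_cube c_cube \<gamma>_cube \<Delta> / 2) < min u 1"
    then show "\<bar>gram (Xlaw b \<sigma> a0 (h_cube c_cube \<gamma>_cube \<Delta>) (r2_trunc c2t \<gamma>2t \<Delta>) \<Delta>) a0
      (h_cube c_cube \<gamma>_cube \<Delta>) j k - (if j = k then 1 else 0)\<bar> \<le> e"
      by (intro gram_Xlaw_near_identity[OF b \<sigma> bound _ _ uc]) auto
  qed
qed

lemma eventually_gram_spectrum_near_1:
  fixes J :: "('d \<Rightarrow> nat) set"
  assumes "finite J" "J \<noteq> {}" "\<delta> > 0"
  shows "eventually (\<lambda>\<Delta>.
    let R = gram (Xlaw b \<sigma> a0 (h_cube c_cube \<gamma>_cube \<Delta>) (r2_trunc c2t \<gamma>2t \<Delta>) \<Delta>) a0 (h_cube c_cube \<gamma>_cube \<Delta>)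
    in 1 - \<delta> \<le> lambda_min_on J R \<and> lambda_min_on J R \<le> lambda_max_on J R \<and> lambda_max_on J R \<le> 1 + \<delta>)
    (at_right 0)"
proof -
  have "card J > 0" using assms by (simp add: card_gt_0_iff)
  then have "eventually (\<lambda>\<Delta>. \<forall>j\<in>J. \<forall>k\<in>J. \<bar>gram (Xlaw b \<sigma> a0 (h_cube c_cube \<gamma>_cube \<Delta>)
      (r2_trunc c2t \<gamma>2t \<Delta>) \<Delta>) a0 (h_cube c_cube \<gamma>_cube \<Delta>) j k - (if j = k then 1 else 0)\<bar>
      \<le> \<delta> / card J) (at_right 0)"
    using assms by (intro eventually_ball_finite ballI eventually_gram_entry_near) auto
  then show ?thesis
  proof eventually_elim
    case (elim \<Delta>)
    have "real (card J) * (\<delta> / card J) = \<delta>" using \<open>card J > 0\<close> by simp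
    then show ?case
      using lambda_min_max_near_identity[OF assms(1,2), where e = "\<delta> / card J"] elim
      by (simp add: Let_def gram_def mult.commute)
  qed
qed

lemma eventually_m_sup_le:
  assumes "e > 0"
  shows "eventually (\<lambda>\<Delta>. 0 \<le> m_sup (Xlaw b \<sigma> a0 (h_cube c_cube \<gamma>_cube \<Delta>) (r2_trunc c2t \<gamma>2t \<Delta>) \<Delta>) a0
      (h_cube c_cube \<gamma>_cube \<Delta>) Q
    \<and> m_sup (Xlaw b \<sigma> a0 (h_cube c_cube \<gamma>_cube \<Delta>) (r2_trunc c2t \<gamma>2t \<Delta>) \<Delta>) a0 (h_cube c_cube \<gamma>_cube \<Delta>) Q
      \<le> (\<Sum>j\<in>(multi_idx Q :: ('d \<Rightarrow> nat) set). \<Prod>d\<in>UNIV. 2 * real (j d) + 1) + e) (at_right 0)"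
proof -
  let ?H = "\<lambda>y. \<Sum>j\<in>(multi_idx Q :: ('d \<Rightarrow> nat) set). (p_leg j y)^2"
  have "uniformly_continuous_on closed_box2 ?H"
    by (intro compact_uniformly_continuous compact_closed_box2 continuous_intros continuous_on_p_leg)
  then obtain u where "u > 0" and uc: "\<forall>y\<in>closed_box2. \<forall>y'\<in>closed_box2. dist y' y < u
      \<longrightarrow> dist (?H y') (?H y) < e"
    unfolding uniformly_continuous_on_def using assms by metis
  have "0 < min (u / CARD('d)) 1" using \<open>u > 0\<close> by simp
  from eventually_scaled_step_less[OF this] show ?thesis
    by (elim eventually_mono, intro m_sup_Xlaw_le[OF b \<sigma> bound _ _ uc]) auto
qed

end

lemma eventually_at_right_0_imp_ex_le:
  assumes "eventually P (at_right (0::real))"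
  shows "\<exists>d>0. \<forall>x. 0 < x \<and> x \<le> d \<longrightarrow> P x"
proof -
  obtain d where "d > 0" "\<And>x. 0 < x \<Longrightarrow> x < d \<Longrightarrow> P x"
    using assms unfolding eventually_at_right_field by auto
  then show ?thesis by (intro exI[of _ "d / 2"]) auto
qed

theorem lemma5p4:
  fixes b :: "real^'d::finite \<Rightarrow> real^'d" and \<sigma> :: "real^'d \<Rightarrow> real^'d^'d"
    and a0 :: "real^'d" and Q :: nat
    and C c_cube \<gamma>_cube c2t \<gamma>2t \<gamma>p c1p c2p \<tau> :: real
  assumes "b \<in> borel_measurable borel" and "\<sigma> \<in> borel_measurable borel"
    and "\<forall>u. norm (b u) + onorm (\<lambda>x. \<sigma> u *v x) \<le> C"
    and "c_cube > 0" and "0 < \<gamma>_cube" and "\<gamma>_cube < 1/2"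
    and "c2t > 0" and "\<gamma>2t > 0"
    and "\<gamma>p > 0" and "c2p > 0"
    and "c1p > 2/3 + 8/3 * (\<Sum>j\<in>(multi_idx Q :: ('d \<Rightarrow> nat) set). \<Prod>d\<in>UNIV. 2 * real (j d) + 1)"
    and "0 < \<tau>"
    and "\<tau> < 1 - sqrt ((2/3 + 8/3 * (\<Sum>j\<in>(multi_idx Q :: ('d \<Rightarrow> nat) set). \<Prod>d\<in>UNIV. 2 * real (j d) + 1)) / c1p)"
  shows "\<exists>\<Delta>0>0. \<forall>\<Delta>. 0 < \<Delta> \<and> \<Delta> \<le> \<Delta>0 \<longrightarrow>
    (let h = h_cube c_cube \<gamma>_cube \<Delta>;
         r2 = r2_trunc c2t \<gamma>2t \<Delta>;
         M = Xlaw b \<sigma> a0 h r2 \<Delta>;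
         J = (multi_idx Q :: ('d \<Rightarrow> nat) set);
         K = real (card J);
         R = gram M a0 h;
         lmin = lambda_min_on J R;
         lmax = lambda_max_on J R;
         m = m_sup M a0 h Q;
         L = real_of_int \<lceil>\<gamma>p * c1p * ln (c2p / \<Delta>)\<rceil>;
         \<epsilon> = 1 - \<tau> / lmin
     in \<epsilon> \<in> {0<..1 - \<tau> / 2} \<and>
        2 * K * exp (- (3 * \<epsilon>\<^sup>2 * L) /
            (6 * m * lmax / lmin\<^sup>2 + 2 * \<epsilon> * (m / lmin + lmax / lmin)))
        \<le> 2 * real ((CARD('d) + Q) choose CARD('d)) / c2p powr \<gamma>p * \<Delta> powr \<gamma>p)"
proof (rule eventually_at_right_0_imp_ex_le)
  define J where "J = (multi_idx Q :: ('d \<Rightarrow> nat) set)"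
  define S0 where "S0 = (\<Sum>j\<in>J. \<Prod>d\<in>(UNIV::'d set). 2 * real (j d) + 1)"
  have J: "finite J" "J \<noteq> {}" unfolding J_def using finite_multi_idx zero_in_multi_idx by blast+
  have "S0 \<ge> 0" unfolding S0_def by (intro sum_nonneg prod_nonneg) auto
  then obtain \<delta> where \<delta>: "0 < \<delta>" "\<delta> < 1 - \<tau>" "\<delta> \<le> 1/2"
    and key: "(1 + \<delta>) * bernstein_denominator_bound S0 \<delta> \<le> 3 * c1p * (1 - \<tau> / (1 - \<delta>))^2"
    using exists_delta_margin[of S0 \<tau> c1p] assms(11-13) unfolding S0_def J_def by blast
  have "c1p > 0" using assms(11) \<open>S0 \<ge> 0\<close> unfolding S0_def J_def by linarith
  have binom: "real ((CARD('d) + Q) choose CARD('d)) \<ge> 1"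
    by (simp add: Suc_le_eq zero_less_binomial_iff)
  show "eventually (\<lambda>\<Delta>. let h = h_cube c_cube \<gamma>_cube \<Delta>; r2 = r2_trunc c2t \<gamma>2t \<Delta>;
         M = Xlaw b \<sigma> a0 h r2 \<Delta>; J = (multi_idx Q :: ('d \<Rightarrow> nat) set); K = real (card J);
         R = gram M a0 h; lmin = lambda_min_on J R; lmax = lambda_max_on J R; m = m_sup M a0 h Q;
         L = real_of_int \<lceil>\<gamma>p * c1p * ln (c2p / \<Delta>)\<rceil>; \<epsilon> = 1 - \<tau> / lmin
     in \<epsilon> \<in> {0<..1 - \<tau> / 2} \<and>
        2 * K * exp (- (3 * \<epsilon>\<^sup>2 * L) / (6 * m * lmax / lmin\<^sup>2 + 2 * \<epsilon> * (m / lmin + lmax / lmin)))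
        \<le> 2 * real ((CARD('d) + Q) choose CARD('d)) / c2p powr \<gamma>p * \<Delta> powr \<gamma>p) (at_right 0)"
    using eventually_gram_spectrum_near_1[OF assms(1-8) J \<delta>(1), of a0]
      eventually_m_sup_le[OF assms(1-8) \<delta>(1), of a0 Q]
      eventually_powr_small[OF mult_pos_pos[OF \<delta>(1) assms(9)] assms(10), of "real (card J)"]
      eventually_at_right_less[of 0]
  proof eventually_elim
    case (elim \<Delta>)
    then show ?case
      unfolding Let_def J_def[symmetric] S0_def[symmetric]
      using J binom \<open>c1p > 0\<close> assms(9,10)
      by (intro concentration_bound_arith[OF \<delta> \<open>0 < \<tau>\<close> key]) (auto simp: card_gt_0_iff)
  qed
qed

end
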